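(* On the 3-torus $P=\mathbb T^3=(\mathbb R/2\pi\mathbb Z)^3$ with coordinates $x,y,z$, the 1-form $\theta=\cos z\,dx+\sin z\,dy$ is a contact form (not regular), and the Lie algebra $\mathfrak X_{\mathrm{ex}}(P,\theta)$ of exact strict contact vector fields has codimension two in the Lie algebra $\mathfrak X(P,\theta)$ of strict contact vector fields. More precisely, $\mathfrak X(P,\theta)=\mathrm{Span}\{\partial_x,\partial_y\}\ltimes\mathfrak X_{\mathrm{ex}}(P,\theta)$, and the image of the flux map $X\mapsto[i_X\mu]$ restricted to $\mathfrak X(P,\theta)$ is the 2-dimensional subspace of $H^2(P,\mathbb R)$ spanned by $[dy\wedge dz]$ and $[dx\wedge dz]$.
   Context: $\mu=\frac12\theta\wedge d\theta$. $\mathfrak X(P,\theta)=\{X: L_X\theta=0\}$ and $\mathfrak X_{\mathrm{ex}}(P,\theta)=\{X\in\mathfrak X(P,\theta): i_X\mu\text{ is exact}\}$. *)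

theory Defs
  imports "HOL-Analysis.Analysis"
begin

text \<open>The 3-torus is modelled as R^3 modulo (2 pi Z)^3: smooth objects on the torus are
smooth functions on R^3 that are 2pi-periodic in each coordinate. Coordinates: x = p$1,
y = p$2, z = p$3 (indices of type 3).\<close>

definition pd :: "3 \<Rightarrow> (real^3 \<Rightarrow> real) \<Rightarrow> real^3 \<Rightarrow> real" where
  "pd i f p = frechet_derivative f (at p) (axis i 1)"

fun smooth_k :: "nat \<Rightarrow> (real^3 \<Rightarrow> real) \<Rightarrow> bool" where
  "smooth_k 0 f = continuous_on UNIV f"
| "smooth_k (Suc n) f = ((\<forall>p. f differentiable (at p)) \<and> (\<forall>i. smooth_k n (pd i f)))"

definition smooth3 :: "(real^3 \<Rightarrow> real) \<Rightarrow> bool" where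
  "smooth3 f = (\<forall>n. smooth_k n f)"

definition periodic3 :: "(real^3 \<Rightarrow> real) \<Rightarrow> bool" where
  "periodic3 f = (\<forall>p i. f (p + axis i (2*pi)) = f p)"

definition tfun :: "(real^3 \<Rightarrow> real) \<Rightarrow> bool" where
  "tfun f = (smooth3 f \<and> periodic3 f)"

text \<open>vector fields and 1-forms: component functions (coefficients of d/dx_i resp. dx_i)\<close>
definition tvec :: "(real^3 \<Rightarrow> real^3) \<Rightarrow> bool" where
  "tvec V = (\<forall>i. tfun (\<lambda>p. V p $ i))"

text \<open>2-forms: omega = sum_{i<j} omega_ij dx_i wedge dx_j, stored as antisymmetric matrices\<close>
definition t2form :: "(real^3 \<Rightarrow> real^3^3) \<Rightarrow> bool" where
  "t2form w = ((\<forall>i j. tfun (\<lambda>p. w p $ i $ j)) \<and> (\<forall>p i j. w p $ i $ j = - w p $ j $ i))"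

definition d1 :: "(real^3 \<Rightarrow> real^3) \<Rightarrow> real^3 \<Rightarrow> real^3^3" where
  "d1 a p = (\<chi> i j. pd i (\<lambda>q. a q $ j) p - pd j (\<lambda>q. a q $ i) p)"

text \<open>wedge of a 1-form and a 2-form; result = coefficient of dx wedge dy wedge dz\<close>
definition wedge12 :: "(real^3 \<Rightarrow> real^3) \<Rightarrow> (real^3 \<Rightarrow> real^3^3) \<Rightarrow> real^3 \<Rightarrow> real" where
  "wedge12 a b p = a p $ 1 * b p $ 2 $ 3 - a p $ 2 * b p $ 1 $ 3 + a p $ 3 * b p $ 1 $ 2"

definition mu :: "(real^3 \<Rightarrow> real^3) \<Rightarrow> real^3 \<Rightarrow> real" where
  "mu th p = (1/2) * wedge12 th (d1 th) p"

definition interior3 :: "(real^3 \<Rightarrow> real^3) \<Rightarrow> (real^3 \<Rightarrow> real) \<Rightarrow> real^3 \<Rightarrow> real^3^3" where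
  "interior3 X f p = (\<chi> i j. f p * det (\<chi> r. if r = 1 then X p else if r = 2 then axis i 1 else axis j 1))"

definition lie1 :: "(real^3 \<Rightarrow> real^3) \<Rightarrow> (real^3 \<Rightarrow> real^3) \<Rightarrow> real^3 \<Rightarrow> real^3" where
  "lie1 X a p = (\<chi> j. \<Sum>i\<in>UNIV. X p $ i * pd i (\<lambda>q. a q $ j) p + a p $ i * pd j (\<lambda>q. X q $ i) p)"

definition lie_bracket :: "(real^3 \<Rightarrow> real^3) \<Rightarrow> (real^3 \<Rightarrow> real^3) \<Rightarrow> real^3 \<Rightarrow> real^3" where
  "lie_bracket X Y p = (\<chi> i. \<Sum>j\<in>UNIV. X p $ j * pd j (\<lambda>q. Y q $ i) p - Y p $ j * pd j (\<lambda>q. X q $ i) p)"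

definition exact2 :: "(real^3 \<Rightarrow> real^3^3) \<Rightarrow> bool" where
  "exact2 w = (\<exists>a. tvec a \<and> d1 a = w)"

definition strict_contact :: "(real^3 \<Rightarrow> real^3) \<Rightarrow> (real^3 \<Rightarrow> real^3) set" where
  "strict_contact th = {X. tvec X \<and> lie1 X th = (\<lambda>p. 0)}"

definition exact_strict_contact :: "(real^3 \<Rightarrow> real^3) \<Rightarrow> (real^3 \<Rightarrow> real^3) set" where
  "exact_strict_contact th = {X \<in> strict_contact th. exact2 (interior3 X (mu th))}"

definition contact_form :: "(real^3 \<Rightarrow> real^3) \<Rightarrow> bool" where
  "contact_form th = (tvec th \<and> (\<forall>p. wedge12 th (d1 th) p \<noteq> 0))"

definition reeb :: "(real^3 \<Rightarrow> real^3) \<Rightarrow> (real^3 \<Rightarrow> real^3) \<Rightarrow> bool" where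
  "reeb th R = (tvec R \<and> (\<forall>p. th p \<bullet> R p = 1 \<and> (\<forall>j. (\<Sum>i\<in>UNIV. R p $ i * d1 th p $ i $ j) = 0)))"

definition teq :: "real^3 \<Rightarrow> real^3 \<Rightarrow> bool" where
  "teq p q = (\<forall>i. \<exists>k::int. p $ i - q $ i = 2 * pi * k)"

text \<open>regular contact form: the Reeb flow is periodic with a common minimal period T > 0
  at every point, i.e. it generates a free S^1-action\<close>
definition regular :: "(real^3 \<Rightarrow> real^3) \<Rightarrow> bool" where
  "regular th = (\<exists>R T. reeb th R \<and> T > 0 \<and>
     (\<forall>\<gamma>. (\<forall>t. (\<gamma> has_vector_derivative R (\<gamma> t)) (at t)) \<longrightarrow>
        (\<forall>t. teq (\<gamma> (t + T)) (\<gamma> t) \<and> (\<forall>s. 0 < s \<and> s < T \<longrightarrow> \<not> teq (\<gamma> (t + s)) (\<gamma> t)))))"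

definition basic2 :: "3 \<Rightarrow> 3 \<Rightarrow> real^3 \<Rightarrow> real^3^3" where
  "basic2 k l p = (\<chi> i j. if i = k \<and> j = l then 1 else if i = l \<and> j = k then -1 else 0)"

definition theta0 :: "real^3 \<Rightarrow> real^3" where
  "theta0 p = (\<chi> i. if i = 1 then cos (p $ 3) else if i = 2 then sin (p $ 3) else 0)"

definition dX :: "real^3 \<Rightarrow> real^3" where "dX p = axis 1 1"
definition dY :: "real^3 \<Rightarrow> real^3" where "dY p = axis 2 1"

end

theory Submission
  imports Defs
begin

text \<open>
A strict contact field X of \<theta> = cos z dx + sin z dy is determined by its contact Hamiltonian
f = \<theta>(X): X = f R + (the Hamiltonian field of f) with Reeb field R = (cos z, sin z, 0), and
L_X \<theta> = 0 forces R f = 0.  As \<mu> = -1/2 dx \<and> dy \<and> dz, one computes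
i_X \<mu> + d(f \<theta>/2) = f dz \<and> (cos z dy - sin z dx).  Integrating f sin z and f cos z in z, then
the resulting z-periods in x resp. y, and subtracting the averages over the circle fibres
produces a primitive of i_X \<mu> minus a constant form a dy \<and> dz + b dx \<and> dz; a and b are
(up to factors) the coefficients of \<partial>_x and \<partial>_y in X modulo exact fields.  They are unique
because a non-zero constant form c dx_j \<and> dx_k is never exact on the torus: integrate a
primitive over the coordinate 2-torus.  Finally strict contact fields preserve \<mu> and so are
divergence free, and for divergence free fields i_[X,Y] \<mu> = d(i_Y i_X \<mu>).
\<close>

section \<open>Calculus on R^3\<close>

lemma pd_eq_derivative: "(f has_derivative f') (at p) \<Longrightarrow> pd i f p = f' (axis i 1)"
  unfolding pd_def by (metis frechet_derivative_at)

lemma cases_3 [case_names 1 2 3]: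
  fixes i :: 3
  obtains "i = 1" | "i = 2" | "i = 3"
  using exhaust_3 by blast

lemma sum_axis_3: "(\<Sum>j\<in>UNIV. axis i (1::real) $ j * f j) = f (i::3)"
  by (cases i rule: cases_3) (auto simp: sum_3 axis_def)

lemma has_derivative_pd:
  assumes "f differentiable (at p)"
  shows "(f has_derivative (\<lambda>h. \<Sum>i\<in>UNIV. h $ i * pd i f p)) (at p)"
proof -
  have D: "(f has_derivative frechet_derivative f (at p)) (at p)"
    using assms frechet_derivative_works by blast
  have "frechet_derivative f (at p) h = (\<Sum>i\<in>UNIV. h $ i * pd i f p)" for h
  proof -
    have "h = (\<Sum>i\<in>UNIV. h $ i *\<^sub>R axis i 1)"
      by (simp add: vec_eq_iff sum_3 axis_def forall_3)
    then have "frechet_derivative f (at p) h =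
        frechet_derivative f (at p) (\<Sum>i\<in>UNIV. h $ i *\<^sub>R axis i 1)" by simp
    also have "\<dots> = (\<Sum>i\<in>UNIV. h $ i * frechet_derivative f (at p) (axis i 1))"
      using has_derivative_linear[OF D] by (simp add: linear_sum linear_scale)
    finally show ?thesis by (simp add: pd_def)
  qed
  then have "frechet_derivative f (at p) = (\<lambda>h. \<Sum>i\<in>UNIV. h $ i * pd i f p)" by (rule ext)
  then show ?thesis using D by simp
qed

lemma has_derivative_vec_nth_3: "((\<lambda>q::real^3. q $ k) has_derivative (\<lambda>h. h $ k)) F"
  by (rule bounded_linear_imp_has_derivative) (simp add: bounded_linear_vec_nth)

lemma has_derivative_cos_z: "((\<lambda>q::real^3. cos (q $ 3)) has_derivative (\<lambda>h. h $ 3 * - sin (p $ 3))) (at p)"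
  by (auto intro!: derivative_eq_intros has_derivative_vec_nth_3)

lemma has_derivative_sin_z: "((\<lambda>q::real^3. sin (q $ 3)) has_derivative (\<lambda>h. h $ 3 * cos (p $ 3))) (at p)"
  by (auto intro!: derivative_eq_intros has_derivative_vec_nth_3)

lemma differentiable_has_frechet_derivative:
  "f differentiable (at p) \<Longrightarrow> (f has_derivative frechet_derivative f (at p)) (at p)"
  using frechet_derivative_works by blast

lemma pd_add: "f differentiable (at p) \<Longrightarrow> g differentiable (at p) \<Longrightarrow>
    pd i (\<lambda>q. f q + g q) p = pd i f p + pd i g p"
  by (subst pd_eq_derivative[OF has_derivative_add[OF differentiable_has_frechet_derivative
        differentiable_has_frechet_derivative]]) (auto simp: pd_def)

lemma pd_diff: "f differentiable (at p) \<Longrightarrow> g differentiable (at p) \<Longrightarrow>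
    pd i (\<lambda>q. f q - g q) p = pd i f p - pd i g p"
  by (subst pd_eq_derivative[OF has_derivative_diff[OF differentiable_has_frechet_derivative
        differentiable_has_frechet_derivative]]) (auto simp: pd_def)

lemma pd_mult: "f differentiable (at p) \<Longrightarrow> g differentiable (at p) \<Longrightarrow>
    pd i (\<lambda>q. f q * g q) p = pd i f p * g p + f p * pd i g p"
  by (subst pd_eq_derivative[OF has_derivative_mult[OF differentiable_has_frechet_derivative
        differentiable_has_frechet_derivative]]) (auto simp: pd_def)

lemma pd_minus: "f differentiable (at p) \<Longrightarrow> pd i (\<lambda>q. - f q) p = - pd i f p"
  by (subst pd_eq_derivative[OF has_derivative_minus[OF differentiable_has_frechet_derivative]])
    (auto simp: pd_def)

lemma pd_const: "pd i (\<lambda>q. c) p = 0"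
  by (subst pd_eq_derivative[OF has_derivative_const]) auto

lemma pd_vec_nth: "pd i (\<lambda>q. q $ k) p = (if i = k then 1 else 0)"
  by (subst pd_eq_derivative[OF has_derivative_vec_nth_3]) (auto simp: axis_def)

lemma pd_cos_z: "pd i (\<lambda>q. cos (q $ 3)) p = (if i = 3 then - sin (p $ 3) else 0)"
  using pd_eq_derivative[OF has_derivative_cos_z, of i] by (auto simp: axis_def)

lemma pd_sin_z: "pd i (\<lambda>q. sin (q $ 3)) p = (if i = 3 then cos (p $ 3) else 0)"
  using pd_eq_derivative[OF has_derivative_sin_z, of i] by (auto simp: axis_def)

lemma differentiable_cos_z: "(\<lambda>q::real^3. cos (q $ 3)) differentiable at p"
  and differentiable_sin_z: "(\<lambda>q::real^3. sin (q $ 3)) differentiable at p"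
  using has_derivative_cos_z has_derivative_sin_z by (auto simp: differentiable_def)

lemma smooth3_differentiable: "smooth3 f \<Longrightarrow> f differentiable (at p)"
  unfolding smooth3_def by (metis smooth_k.simps(2))

lemma smooth3_pd: "smooth3 f \<Longrightarrow> smooth3 (pd i f)"
  unfolding smooth3_def by (metis smooth_k.simps(2))

lemma smooth3_continuous_on: "smooth3 f \<Longrightarrow> continuous_on UNIV f"
  unfolding smooth3_def by (metis smooth_k.simps(1))

lemma continuous_on_if_differentiable: "(\<And>p. f differentiable (at p)) \<Longrightarrow> continuous_on UNIV f"
  by (meson continuous_at_imp_continuous_on differentiable_imp_continuous_within)

lemma smooth3_if_pd_closed:
  assumes "\<And>f p. P f \<Longrightarrow> f differentiable (at p)" "\<And>f i. P f \<Longrightarrow> P (pd i f)" "P f"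
  shows "smooth3 f"
proof -
  have "\<forall>f. P f \<longrightarrow> smooth_k n f" for n
  proof (induction n)
    case 0
    then show ?case using assms(1) continuous_on_if_differentiable by (metis smooth_k.simps(1))
  next
    case (Suc n)
    then show ?case using assms(1,2) by auto
  qed
  then show ?thesis using assms(3) smooth3_def by blast
qed

lemma smooth3I: "(\<And>p. f differentiable (at p)) \<Longrightarrow> (\<And>i. smooth3 (pd i f)) \<Longrightarrow> smooth3 f"
  unfolding smooth3_def
proof
  fix n assume "\<And>p. f differentiable (at p)" "\<And>i. \<forall>n. smooth_k n (pd i f)"
  then show "smooth_k n f"
    by (cases n) (use continuous_on_if_differentiable in auto)
qed

lemma pd_const_fun: "pd i (\<lambda>q. c) = (\<lambda>q. 0)"
  by (auto simp: pd_const)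

lemma pd_vec_nth_fun: "pd i (\<lambda>q. q $ k) = (\<lambda>q. if i = k then 1 else 0)"
  by (auto simp: pd_vec_nth)

lemma pd_cos_z_fun: "pd i (\<lambda>q. cos (q $ 3)) = (\<lambda>q. if i = 3 then - sin (q $ 3) else 0)"
  by (auto simp: pd_cos_z)

lemma pd_sin_z_fun: "pd i (\<lambda>q. sin (q $ 3)) = (\<lambda>q. if i = 3 then cos (q $ 3) else 0)"
  by (auto simp: pd_sin_z)

lemma smooth3_const: "smooth3 (\<lambda>q. c)"
  by (rule smooth3_if_pd_closed[where P="\<lambda>h. \<exists>c. h = (\<lambda>q. c)"]) (auto simp: pd_const_fun)

lemma smooth3_vec_nth: "smooth3 (\<lambda>q. q $ k)"
  by (rule smooth3I)
    (auto simp: pd_vec_nth_fun smooth3_const differentiable_def intro: has_derivative_vec_nth_3)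

lemma smooth_k_add: "smooth_k n f \<Longrightarrow> smooth_k n g \<Longrightarrow> smooth_k n (\<lambda>q. f q + g q)"
proof (induction n arbitrary: f g)
  case 0 then show ?case by (auto intro: continuous_on_add)
next
  case (Suc n)
  then have d: "\<And>p. f differentiable (at p)" "\<And>p. g differentiable (at p)" by auto
  then have "pd i (\<lambda>q. f q + g q) = (\<lambda>q. pd i f q + pd i g q)" for i by (auto simp: pd_add)
  with Suc d show ?case by (auto intro: differentiable_add)
qed

lemma smooth3_add: "smooth3 f \<Longrightarrow> smooth3 g \<Longrightarrow> smooth3 (\<lambda>q. f q + g q)"
  unfolding smooth3_def by (auto intro: smooth_k_add)

lemma pd_add_fun: "smooth3 f \<Longrightarrow> smooth3 g \<Longrightarrow> pd i (\<lambda>q. f q + g q) = (\<lambda>q. pd i f q + pd i g q)"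
  by (auto simp: pd_add smooth3_differentiable)

lemma pd_diff_fun: "smooth3 f \<Longrightarrow> smooth3 g \<Longrightarrow> pd i (\<lambda>q. f q - g q) = (\<lambda>q. pd i f q - pd i g q)"
  by (auto simp: pd_diff smooth3_differentiable)

lemma pd_mult_fun: "smooth3 f \<Longrightarrow> smooth3 g \<Longrightarrow>
    pd i (\<lambda>q. f q * g q) = (\<lambda>q. pd i f q * g q + f q * pd i g q)"
  by (auto simp: pd_mult smooth3_differentiable)

lemma pd_minus_fun: "smooth3 f \<Longrightarrow> pd i (\<lambda>q. - f q) = (\<lambda>q. - pd i f q)"
  by (auto simp: pd_minus smooth3_differentiable)

lemma pd_cmult_fun: "smooth3 f \<Longrightarrow> pd i (\<lambda>q. c * f q) = (\<lambda>q. c * pd i f q)"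
  using pd_mult_fun[OF smooth3_const] by (simp add: pd_const_fun)

lemma pd_divide_const_fun: "smooth3 f \<Longrightarrow> pd i (\<lambda>q. f q / c) = (\<lambda>q. pd i f q / c)"
  using pd_cmult_fun[of f i "inverse c"] by (simp add: divide_inverse mult.commute)

lemma smooth3_mult: "smooth3 f \<Longrightarrow> smooth3 g \<Longrightarrow> smooth3 (\<lambda>q. f q * g q)"
proof -
  have "\<forall>f g. smooth3 f \<longrightarrow> smooth3 g \<longrightarrow> smooth_k n (\<lambda>q. f q * g q)" for n
  proof (induction n)
    case 0
    then show ?case by (auto intro: continuous_on_mult smooth3_continuous_on)
  next
    case (Suc n)
    show ?case
    proof (intro allI impI)
      fix f g :: "real^3 \<Rightarrow> real" assume fg: "smooth3 f" "smooth3 g"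
      have "smooth_k n (pd i (\<lambda>q. f q * g q))" for i
        using Suc fg smooth3_pd by (simp add: pd_mult_fun smooth_k_add)
      then show "smooth_k (Suc n) (\<lambda>q. f q * g q)"
        using fg by (simp add: differentiable_mult smooth3_differentiable)
    qed
  qed
  then show "smooth3 f \<Longrightarrow> smooth3 g \<Longrightarrow> smooth3 (\<lambda>q. f q * g q)" unfolding smooth3_def by blast
qed

lemma smooth3_cmult: "smooth3 f \<Longrightarrow> smooth3 (\<lambda>q. c * f q)"
  using smooth3_mult[OF smooth3_const] by blast

lemma smooth3_minus: "smooth3 f \<Longrightarrow> smooth3 (\<lambda>q. - f q)"
  using smooth3_cmult[of f "-1"] by simp

lemma smooth3_diff: "smooth3 f \<Longrightarrow> smooth3 g \<Longrightarrow> smooth3 (\<lambda>q. f q - g q)"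
  using smooth3_add[OF _ smooth3_minus, of f g] by simp

lemma smooth3_divide_const: "smooth3 f \<Longrightarrow> smooth3 (\<lambda>q. f q / c)"
  using smooth3_cmult[of f "inverse c"] by (simp add: divide_inverse mult.commute)

lemma smooth3_cos_sin_z: "smooth3 (\<lambda>q. a * cos (q $ 3) + b * sin (q $ 3))"
proof (rule smooth3_if_pd_closed[where P="\<lambda>h. \<exists>a b. h = (\<lambda>q. a * cos (q $ 3) + b * sin (q $ 3))"])
  fix h :: "real^3 \<Rightarrow> real" and i
  assume "\<exists>a b. h = (\<lambda>q. a * cos (q $ 3) + b * sin (q $ 3))"
  then obtain a b where h: "h = (\<lambda>q. a * cos (q $ 3) + b * sin (q $ 3))" by blast
  have "pd i h = (\<lambda>q. (if i = 3 then b else 0) * cos (q $ 3) + (if i = 3 then -a else 0) * sin (q $ 3))"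
    unfolding h by (rule ext) (simp add: pd_add pd_mult pd_const pd_cos_z pd_sin_z
        differentiable_cos_z differentiable_sin_z differentiable_mult)
  then show "\<exists>a b. pd i h = (\<lambda>q. a * cos (q $ 3) + b * sin (q $ 3))" by blast
qed (auto intro!: differentiable_add differentiable_mult differentiable_cos_z differentiable_sin_z)

lemma smooth3_cos_z: "smooth3 (\<lambda>q. cos (q $ 3))"
  using smooth3_cos_sin_z[of 1 0] by simp

lemma smooth3_sin_z: "smooth3 (\<lambda>q. sin (q $ 3))"
  using smooth3_cos_sin_z[of 0 1] by simp

lemmas smooth3_intros = smooth3_const smooth3_vec_nth smooth3_add smooth3_diff smooth3_mult
  smooth3_cmult smooth3_minus smooth3_divide_const smooth3_cos_z smooth3_sin_z

lemmas pd_fun_simps = pd_const_fun pd_vec_nth_fun pd_add_fun pd_diff_fun pd_mult_fun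
  pd_minus_fun pd_cmult_fun pd_divide_const_fun pd_cos_z_fun pd_sin_z_fun

definition set_coord :: "3 \<Rightarrow> real \<Rightarrow> real^3 \<Rightarrow> real^3" where
  "set_coord k c p = (\<chi> i. if i = k then c else p $ i)"

lemma set_coord_nth [simp]: "set_coord k c p $ i = (if i = k then c else p $ i)"
  by (simp add: set_coord_def)

lemma set_coord_same [simp]: "set_coord k (p $ k) p = p"
  by (simp add: vec_eq_iff)

lemma set_coord_set_coord [simp]: "set_coord k c (set_coord k d p) = set_coord k c p"
  by (simp add: vec_eq_iff)

lemma set_coord_commute: "j \<noteq> k \<Longrightarrow> set_coord j c (set_coord k d q) = set_coord k d (set_coord j c q)"
  by (auto simp: vec_eq_iff)

lemma set_coord_add_axis_other: "j \<noteq> k \<Longrightarrow> set_coord k c (q + axis j x) = set_coord k c q + axis j x"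
  by (auto simp: vec_eq_iff axis_def)

lemma set_coord_add_axis_same: "set_coord k c (q + axis k x) = set_coord k c q"
  by (auto simp: vec_eq_iff axis_def)

lemma axis_nth_other: "j \<noteq> k \<Longrightarrow> axis j x $ k = 0"
  by (simp add: axis_def)

lemma has_derivative_set_coord: "((\<lambda>q. set_coord k c q) has_derivative (\<lambda>h. set_coord k 0 h)) F"
proof -
  have "linear (\<lambda>h. set_coord k 0 h)"
    by (rule linearI) (auto simp: vec_eq_iff)
  moreover have "(\<lambda>q. set_coord k c q) = (\<lambda>q. set_coord k 0 q + c *\<^sub>R axis k 1)"
    by (auto simp: vec_eq_iff axis_def)
  ultimately show ?thesis
    by (metis has_derivative_add_const linear_imp_has_derivative)
qed

lemma pd_set_coord:
  assumes "f differentiable (at (set_coord k c p))"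
  shows "pd i (\<lambda>q. f (set_coord k c q)) p = (if i = k then 0 else pd i f (set_coord k c p))"
proof -
  have "((\<lambda>q. f (set_coord k c q)) has_derivative
      (\<lambda>h. \<Sum>j\<in>UNIV. set_coord k 0 h $ j * pd j f (set_coord k c p))) (at p)"
    using has_derivative_compose[OF has_derivative_set_coord has_derivative_pd[OF assms]]
    by (simp add: o_def)
  from pd_eq_derivative[OF this] show ?thesis
    by (cases i rule: cases_3; cases k rule: cases_3) (auto simp: sum_3 axis_def)
qed

lemma pd_translate:
  assumes "f differentiable (at (p + v))"
  shows "pd i (\<lambda>q. f (q + v)) p = pd i f (p + v)"
proof -
  have "((\<lambda>q. f (q + v)) has_derivative (\<lambda>h. \<Sum>j\<in>UNIV. h $ j * pd j f (p + v))) (at p)"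
    using has_derivative_compose[OF has_derivative_add_const[OF has_derivative_ident]
        has_derivative_pd[OF assms]] by (simp add: o_def)
  from pd_eq_derivative[OF this] show ?thesis
    by (simp add: sum_axis_3)
qed

lemma smooth3_compose_pd_closed:
  assumes \<sigma>: "\<And>p. \<sigma> differentiable (at p)"
    and pd_comp: "\<And>f i. smooth3 f \<Longrightarrow> \<exists>f'. smooth3 f' \<and> pd i (\<lambda>q. f (\<sigma> q)) = (\<lambda>q. f' (\<sigma> q))"
    and f: "smooth3 f"
  shows "smooth3 (\<lambda>q. f (\<sigma> q))"
proof (rule smooth3_if_pd_closed[where P="\<lambda>h. \<exists>f. smooth3 f \<and> h = (\<lambda>q. f (\<sigma> q))"])
  fix h :: "real^3 \<Rightarrow> real" and p
  assume "\<exists>f. smooth3 f \<and> h = (\<lambda>q. f (\<sigma> q))"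
  then show "h differentiable (at p)"
    using differentiable_chain_at[OF \<sigma> smooth3_differentiable] by (auto simp: o_def)
qed (use pd_comp f in blast)+

lemma smooth3_set_coord: "smooth3 f \<Longrightarrow> smooth3 (\<lambda>q. f (set_coord k c q))"
proof (rule smooth3_compose_pd_closed)
  show "(\<lambda>q. set_coord k c q) differentiable (at p)" for p
    using has_derivative_set_coord differentiable_def by blast
  show "\<exists>f'. smooth3 f' \<and> pd i (\<lambda>q. f (set_coord k c q)) = (\<lambda>q. f' (set_coord k c q))"
    if "smooth3 f" for f i
  proof (cases "i = k")
    case True
    then show ?thesis using that smooth3_const
      by (intro exI[of _ "\<lambda>_. 0"]) (auto simp: pd_set_coord smooth3_differentiable)
  next
    case False
    then show ?thesis using that smooth3_pd
      by (intro exI[of _ "pd i f"]) (auto simp: pd_set_coord smooth3_differentiable)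
  qed
qed

lemma pd_set_coord_fun: "smooth3 f \<Longrightarrow>
    pd i (\<lambda>q. f (set_coord k c q)) = (\<lambda>q. if i = k then 0 else pd i f (set_coord k c q))"
  by (auto simp: pd_set_coord smooth3_differentiable)

lemma smooth3_translate: "smooth3 f \<Longrightarrow> smooth3 (\<lambda>q. f (q + v))"
proof (rule smooth3_compose_pd_closed)
  show "(\<lambda>q. q + v) differentiable (at p)" for p
    by (simp add: differentiable_add)
  show "\<exists>f'. smooth3 f' \<and> pd i (\<lambda>q. f (q + v)) = (\<lambda>q. f' (q + v))" if "smooth3 f" for f i
    using that smooth3_pd by (intro exI[of _ "pd i f"]) (auto simp: pd_translate smooth3_differentiable)
qed

lemma has_real_derivative_set_coord:
  assumes "\<And>q. f differentiable (at q)"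
  shows "((\<lambda>t. f (set_coord k t p)) has_real_derivative pd k f (set_coord k t p)) (at t)"
proof -
  have "(\<lambda>t. set_coord k t p) = (\<lambda>t. set_coord k 0 p + t *\<^sub>R axis k 1)"
    by (auto simp: vec_eq_iff axis_def)
  then have "((\<lambda>t. set_coord k t p) has_derivative (\<lambda>s. s *\<^sub>R axis k 1)) (at t)"
    by (auto intro!: derivative_eq_intros)
  from has_derivative_compose[OF this has_derivative_pd[OF assms]]
  have "((\<lambda>t. f (set_coord k t p)) has_derivative (\<lambda>s. s * pd k f (set_coord k t p))) (at t)"
    by (cases k rule: cases_3) (auto simp: o_def sum_3 axis_def)
  then show ?thesis
    by (simp add: has_field_derivative_def mult.commute[of _ "pd k f (set_coord k t p)"])
qed

lemma set_coord_eq_if_pd_zero: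
  assumes "\<And>q. f differentiable (at q)" "\<And>q. pd k f q = 0"
  shows "f (set_coord k c p) = f (set_coord k d p)"
  using DERIV_isconst_all[of "\<lambda>t. f (set_coord k t p)"] has_real_derivative_set_coord[OF assms(1)] assms(2)
  by metis

lemma eq_0_if_pd_zero_and_slice_zero:
  assumes "\<And>q. f differentiable (at q)" "\<And>q. pd k f q = 0" "\<And>q. f (set_coord k 0 q) = 0"
  shows "f p = 0"
  using set_coord_eq_if_pd_zero[OF assms(1,2), of "p $ k" p 0] assms(3) by simp

definition scale_coord :: "3 \<Rightarrow> real \<Rightarrow> real^3 \<Rightarrow> real^3" where
  "scale_coord k t p = (\<chi> i. if i = k then t * p $ i else p $ i)"

lemma scale_coord_nth [simp]: "scale_coord k t p $ i = (if i = k then t * p $ i else p $ i)"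
  by (simp add: scale_coord_def)

lemma scale_coord_one [simp]: "scale_coord k 1 p = p"
  by (simp add: vec_eq_iff)

lemma scale_coord_eq: "scale_coord k t x = x + ((t - 1) * x $ k) *\<^sub>R axis k 1"
  by (auto simp: vec_eq_iff axis_def algebra_simps)

lemma scale_coord_eq_set_coord: "scale_coord k t p = set_coord k (t * p $ k) p"
  by (simp add: vec_eq_iff)

lemma has_derivative_scale_coord: "((\<lambda>x. scale_coord k t x) has_derivative (\<lambda>h. scale_coord k t h)) F"
proof -
  have "linear (\<lambda>h. scale_coord k t h)"
    by (rule linearI) (auto simp: vec_eq_iff algebra_simps)
  then show ?thesis by (simp add: linear_imp_has_derivative)
qed

lemma continuous_on_scale_coord_compose:
  assumes "continuous_on UNIV g"
  shows "continuous_on (UNIV \<times> S) (\<lambda>(x, t). g (scale_coord k t x))"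
proof -
  have "continuous_on (UNIV \<times> S) (\<lambda>(x, t). scale_coord k t x)"
    unfolding scale_coord_eq split_beta
    by (intro continuous_intros continuous_on_compose2[of UNIV "\<lambda>x. x $ k"])
      (auto intro: linear_continuous_on bounded_linear_vec_nth)
  from continuous_on_compose2[OF assms this] show ?thesis
    by (simp add: split_beta)
qed

lemma continuous_on_scale_coord_ray: "smooth3 g \<Longrightarrow> continuous_on S (\<lambda>t. g (scale_coord k t p))"
  unfolding scale_coord_eq
  by (rule continuous_on_compose2[OF smooth3_continuous_on]) (auto intro!: continuous_intros)

lemma integrable_on_slice:
  fixes F :: "'a::topological_space \<Rightarrow> real \<Rightarrow> 'b::banach"
  assumes "continuous_on (UNIV \<times> cbox a b) (\<lambda>(x, t). F x t)"
  shows "F x integrable_on cbox a b"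
proof -
  from continuous_on_compose2[OF assms, of "cbox a b" "\<lambda>t. (x, t)"]
  have "continuous_on (cbox a b) (F x)"
    using continuous_on_Pair[OF continuous_on_const continuous_on_id] by auto
  then show ?thesis by (rule integrable_continuous)
qed

text \<open>Differentiating in x_k raises the moment; the zeroth moment, times x_k, is an
  antiderivative in x_k.\<close>

definition ray_integral :: "nat \<Rightarrow> 3 \<Rightarrow> (real^3 \<Rightarrow> real) \<Rightarrow> real^3 \<Rightarrow> real" where
  "ray_integral m k g p = integral {0..1} (\<lambda>t. t ^ m * g (scale_coord k t p))"

lemma has_derivative_ray_integral:
  assumes g: "smooth3 g"
  shows "(ray_integral m k g has_derivative
      (\<lambda>h. \<Sum>i\<in>UNIV. h $ i * ray_integral (if i = k then Suc m else m) k (pd i g) p)) (at p)"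
proof -
  define c where "c i x t = t ^ m * (if i = k then t else 1) * pd i g (scale_coord k t x)" for i x t
  define D where "D x t = (\<Sum>i\<in>UNIV. c i x t *\<^sub>R blinfun_inner_left (axis i (1::real)))" for x t
  have D_apply: "blinfun_apply (D x t) h = (\<Sum>i\<in>UNIV. h $ i * c i x t)" for x t h
    by (simp add: D_def blinfun.sum_left inner_axis mult.commute blinfun.scaleR_left)
  have cont_c: "continuous_on (UNIV \<times> cbox 0 1) (\<lambda>(x, t). c i x t)" for i
    using continuous_on_scale_coord_compose[OF smooth3_continuous_on[OF smooth3_pd[OF g]]]
    unfolding c_def split_beta by (cases "i = k") (auto intro!: continuous_intros)
  have cont_D: "continuous_on (UNIV \<times> cbox 0 1) (\<lambda>(x, t). D x t)"
    unfolding D_def split_beta using cont_c unfolding split_beta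
    by (intro continuous_intros) auto
  have deriv: "((\<lambda>x. t ^ m * g (scale_coord k t x)) has_derivative blinfun_apply (D x t))
      (at x within UNIV)" for x t
  proof -
    have "((\<lambda>x. g (scale_coord k t x)) has_derivative
        (\<lambda>h. \<Sum>j\<in>UNIV. scale_coord k t h $ j * pd j g (scale_coord k t x))) (at x)"
      using has_derivative_compose[OF has_derivative_scale_coord
          has_derivative_pd[OF smooth3_differentiable[OF g]]]
      by (simp add: o_def)
    from has_derivative_mult_right[OF this, of "t ^ m"] show ?thesis
      by (rule has_derivative_eq_rhs) (auto simp: D_apply c_def sum_3 algebra_simps)
  qed
  have integrable: "(\<lambda>t. t ^ m * g (scale_coord k t x)) integrable_on cbox 0 1" for x
    by (intro integrable_continuous continuous_intros continuous_on_scale_coord_ray g)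
  have leibniz: "((\<lambda>x. integral (cbox 0 1) (\<lambda>t. t ^ m * g (scale_coord k t x))) has_derivative
      integral (cbox 0 1) (D p)) (at p within UNIV)"
    by (rule leibniz_rule[OF deriv integrable cont_D]) auto
  have "blinfun_apply (integral (cbox 0 1) (D p)) h =
      (\<Sum>i\<in>UNIV. h $ i * ray_integral (if i = k then Suc m else m) k (pd i g) p)" for h
  proof -
    have "blinfun_apply (integral (cbox 0 1) (D p)) h =
        integral (cbox 0 1) (\<lambda>t. \<Sum>i\<in>UNIV. h $ i * c i p t)"
      by (subst blinfun_apply_integral[OF integrable_on_slice[OF cont_D]]) (simp add: D_apply)
    also have "\<dots> = (\<Sum>i\<in>UNIV. h $ i * integral (cbox 0 1) (c i p))"
      using integrable_on_cmult_left[OF integrable_on_slice[OF cont_c]] by (subst integral_sum) auto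
    also have "\<dots> = (\<Sum>i\<in>UNIV. h $ i * ray_integral (if i = k then Suc m else m) k (pd i g) p)"
      by (intro sum.cong refl) (auto simp: ray_integral_def c_def[abs_def] mult_ac)
    finally show ?thesis .
  qed
  then have "blinfun_apply (integral (cbox 0 1) (D p)) =
      (\<lambda>h. \<Sum>i\<in>UNIV. h $ i * ray_integral (if i = k then Suc m else m) k (pd i g) p)"
    by (rule ext)
  with leibniz show ?thesis
    by (simp add: ray_integral_def[abs_def])
qed

lemma pd_ray_integral_fun:
  "smooth3 g \<Longrightarrow> pd i (ray_integral m k g) = ray_integral (if i = k then Suc m else m) k (pd i g)"
  by (rule ext, subst pd_eq_derivative[OF has_derivative_ray_integral]) (simp_all add: sum_axis_3)

lemma smooth3_ray_integral: "smooth3 g \<Longrightarrow> smooth3 (ray_integral m k g)"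
proof (rule smooth3_if_pd_closed[where P="\<lambda>h. \<exists>m g. smooth3 g \<and> h = ray_integral m k g"])
  fix h :: "real^3 \<Rightarrow> real" and p
  assume "\<exists>m g. smooth3 g \<and> h = ray_integral m k g"
  then show "h differentiable (at p)"
    using has_derivative_ray_integral differentiable_def by blast
next
  fix h :: "real^3 \<Rightarrow> real" and i
  assume "\<exists>m g. smooth3 g \<and> h = ray_integral m k g"
  then show "\<exists>m g. smooth3 g \<and> pd i h = ray_integral m k g"
    using pd_ray_integral_fun smooth3_pd by blast
qed auto

lemma ray_integral_fundamental:
  assumes g: "smooth3 g"
  shows "ray_integral 0 k g p + p $ k * ray_integral 1 k (pd k g) p = g p"
proof -
  define h where "h t = t * g (scale_coord k t p)" for t
  define h' where "h' t = g (scale_coord k t p) + p $ k * (t * pd k g (scale_coord k t p))" for t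
  have "(h has_real_derivative h' t) (at t)" for t
  proof -
    have "((\<lambda>t. t * p $ k) has_real_derivative p $ k) (at t)"
      by (auto intro!: derivative_eq_intros)
    from DERIV_chain2[OF has_real_derivative_set_coord[OF smooth3_differentiable[OF g],
          where k=k and t="t * p $ k" and p=p] this]
    have "((\<lambda>t. g (scale_coord k t p)) has_real_derivative pd k g (scale_coord k t p) * p $ k) (at t)"
      by (simp add: scale_coord_eq_set_coord)
    from DERIV_mult[OF DERIV_ident this] show ?thesis
      unfolding h_def h'_def by (simp add: algebra_simps)
  qed
  then have "(h' has_integral (h 1 - h 0)) {0..1}"
    by (intro fundamental_theorem_of_calculus)
      (auto simp: has_real_derivative_iff_has_vector_derivative[symmetric] intro: DERIV_subset)
  then have "integral {0..1} h' = g p"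
    by (simp add: h_def integral_unique vec_eq_iff)
  moreover have "integral {0..1} h' = integral {0..1} (\<lambda>t. g (scale_coord k t p))
      + p $ k * integral {0..1} (\<lambda>t. t * pd k g (scale_coord k t p))"
  proof -
    have i1: "(\<lambda>t. g (scale_coord k t p)) integrable_on {0..1}"
      and i2: "(\<lambda>t. t * pd k g (scale_coord k t p)) integrable_on {0..1}"
      by (intro integrable_continuous_interval continuous_intros continuous_on_scale_coord_ray
          smooth3_pd g)+
    then show ?thesis
      unfolding h'_def
      by (simp add: integral_add integrable_on_cmult_left[OF i2, of "p $ k", simplified])
  qed
  ultimately show ?thesis by (simp add: ray_integral_def)
qed

definition antideriv :: "3 \<Rightarrow> (real^3 \<Rightarrow> real) \<Rightarrow> real^3 \<Rightarrow> real" where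
  "antideriv k g p = p $ k * ray_integral 0 k g p"

lemma smooth3_antideriv: "smooth3 g \<Longrightarrow> smooth3 (antideriv k g)"
  unfolding antideriv_def[abs_def] by (intro smooth3_mult smooth3_vec_nth smooth3_ray_integral)

lemma antideriv_differentiable: "smooth3 g \<Longrightarrow> antideriv k g differentiable (at p)"
  using smooth3_differentiable smooth3_antideriv by blast

lemma pd_antideriv: "smooth3 g \<Longrightarrow> pd j (antideriv k g) = (if j = k then g else antideriv k (pd j g))"
proof (cases "j = k")
  case True
  assume g: "smooth3 g"
  have "pd k (antideriv k g) p = ray_integral 0 k g p + p $ k * ray_integral 1 k (pd k g) p" for p
    unfolding antideriv_def[abs_def] using g
    by (subst pd_mult_fun)
      (auto intro!: smooth3_vec_nth smooth3_ray_integral simp: pd_vec_nth_fun pd_ray_integral_fun)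
  with True show ?thesis using ray_integral_fundamental[OF g] by auto
next
  case False
  assume "smooth3 g"
  with False show ?thesis
    unfolding antideriv_def[abs_def]
    by (subst pd_mult_fun)
      (auto intro!: smooth3_vec_nth smooth3_ray_integral simp: pd_vec_nth_fun pd_ray_integral_fun)
qed

lemma antideriv_on_slice: "p $ k = 0 \<Longrightarrow> antideriv k g p = 0"
  by (simp add: antideriv_def)

lemma antideriv_const: "antideriv k (\<lambda>q. c) p = c * p $ k"
  by (simp add: antideriv_def ray_integral_def)

lemma antideriv_zero: "antideriv k (\<lambda>q. 0) p = 0"
  by (simp add: antideriv_def ray_integral_def)

lemma antideriv_vec_nth: "j \<noteq> k \<Longrightarrow> antideriv k (\<lambda>q. c * q $ j) p = c * p $ j * p $ k"
  by (simp add: antideriv_def ray_integral_def)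

lemma antideriv_translate:
  assumes "v $ k = 0" "\<And>q. g (q + v) = g q"
  shows "antideriv k g (p + v) = antideriv k g p"
proof -
  have "scale_coord k t (p + v) = scale_coord k t p + v" for t
    using assms(1) by (simp add: vec_eq_iff)
  then show ?thesis using assms by (simp add: antideriv_def ray_integral_def)
qed

lemma antideriv_set_coord:
  assumes "j \<noteq> k"
  shows "antideriv k (\<lambda>q. g (set_coord j c q)) p = antideriv k g (set_coord j c p)"
proof -
  have "scale_coord k t (set_coord j c p) = set_coord j c (scale_coord k t p)" for t
    using assms by (simp add: vec_eq_iff)
  then show ?thesis using assms by (simp add: antideriv_def ray_integral_def)
qed

lemma antideriv_set_coord_invariant:
  assumes "j \<noteq> k" "\<And>c q. g (set_coord j c q) = g q"
  shows "antideriv k g (set_coord j c p) = antideriv k g p"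
  using antideriv_set_coord[OF assms(1), of g c p] assms(2) by simp

lemma antideriv_pd:
  assumes g: "smooth3 g"
  shows "antideriv k (pd k g) p = g p - g (set_coord k 0 p)"
proof -
  let ?F = "\<lambda>q. antideriv k (pd k g) q - g q + g (set_coord k 0 q)"
  have "?F p = 0"
  proof (rule eq_0_if_pd_zero_and_slice_zero[where k=k and f="?F"])
    show "?F differentiable at q" for q
      using g by (intro differentiable_add differentiable_diff antideriv_differentiable smooth3_pd
          smooth3_differentiable smooth3_set_coord)
    show "pd k ?F q = 0" for q
      using g by (simp add: pd_add_fun pd_diff_fun smooth3_diff smooth3_antideriv smooth3_pd
          smooth3_set_coord pd_set_coord_fun pd_antideriv)
    show "?F (set_coord k 0 q) = 0" for q
      by (simp add: antideriv_on_slice)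
  qed
  then show ?thesis by simp
qed

lemma antideriv_linear:
  assumes f: "smooth3 f" and g: "smooth3 g"
  shows "antideriv k (\<lambda>q. a * f q + b * g q) p = a * antideriv k f p + b * antideriv k g p"
proof -
  let ?F = "\<lambda>q. antideriv k (\<lambda>q. a * f q + b * g q) q - (a * antideriv k f q + b * antideriv k g q)"
  have s: "smooth3 (\<lambda>q. a * f q + b * g q)"
    using f g by (intro smooth3_add smooth3_cmult)
  have "?F p = 0"
  proof (rule eq_0_if_pd_zero_and_slice_zero[where k=k and f="?F"])
    show "?F differentiable at q" for q
      using f g s by (intro differentiable_diff differentiable_add differentiable_mult
          differentiable_const antideriv_differentiable)
    show "pd k ?F q = 0" for q
      using f g s by (simp add: pd_diff_fun pd_add_fun pd_cmult_fun smooth3_diff smooth3_add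
          smooth3_cmult smooth3_antideriv pd_antideriv)
    show "?F (set_coord k 0 q) = 0" for q
      by (simp add: antideriv_on_slice)
  qed
  then show ?thesis by simp
qed

lemma antideriv_minus: "smooth3 f \<Longrightarrow> antideriv k (\<lambda>q. - f q) p = - antideriv k f p"
  using antideriv_linear[of f f k "-1" 0 p] by simp

text \<open>The last term is the integral of g over a full period in x_k.\<close>

lemma antideriv_add_period:
  assumes g: "smooth3 g" and per: "\<And>q. g (q + axis k (2*pi)) = g q"
  shows "antideriv k g (p + axis k (2*pi)) = antideriv k g p + antideriv k g (set_coord k (2*pi) p)"
proof -
  let ?a = "axis k (2*pi)"
  let ?F = "\<lambda>q. antideriv k g (q + ?a) - antideriv k g q - antideriv k g (set_coord k (2*pi) q)"
  have s1: "smooth3 (\<lambda>q. antideriv k g (q + ?a))"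
    using g by (intro smooth3_translate smooth3_antideriv)
  have s2: "smooth3 (\<lambda>q. antideriv k g (set_coord k (2*pi) q))"
    using g by (intro smooth3_set_coord smooth3_antideriv)
  have "?F p = 0"
  proof (rule eq_0_if_pd_zero_and_slice_zero[where k=k and f="?F"])
    show "?F differentiable at q" for q
      using g s1 s2 by (intro differentiable_diff smooth3_differentiable smooth3_antideriv)
    have "pd k (\<lambda>q. antideriv k g (q + ?a)) q = g (q + ?a)" for q
      using pd_translate[OF antideriv_differentiable[OF g]] pd_antideriv[OF g] by simp
    then show "pd k ?F q = 0" for q
      using g s1 s2 per by (simp add: pd_diff_fun smooth3_diff smooth3_antideriv pd_set_coord_fun
          pd_antideriv)
    show "?F (set_coord k 0 q) = 0" for q
    proof -
      have "set_coord k 0 q + ?a = set_coord k (2*pi) q"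
        by (simp add: vec_eq_iff axis_def)
      then show ?thesis by (simp add: antideriv_on_slice)
    qed
  qed
  then show ?thesis by simp
qed

lemma pd_commute:
  assumes f: "smooth3 f"
  shows "pd i (pd j f) = pd j (pd i f)"
proof (cases "i = j")
  case False
  have "(\<lambda>q. f (set_coord j 0 q) + antideriv j (pd j f) q) = f"
    by (rule ext) (simp add: antideriv_pd[OF f])
  moreover have "pd i (\<lambda>q. f (set_coord j 0 q) + antideriv j (pd j f) q) =
      (\<lambda>q. pd i f (set_coord j 0 q) + antideriv j (pd i (pd j f)) q)"
    using False f by (simp add: pd_add_fun pd_set_coord_fun pd_antideriv smooth3_pd
        smooth3_set_coord smooth3_antideriv)
  ultimately have "pd i f = (\<lambda>q. pd i f (set_coord j 0 q) + antideriv j (pd i (pd j f)) q)"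
    by simp
  then have "pd j (pd i f) = pd j (\<lambda>q. pd i f (set_coord j 0 q) + antideriv j (pd i (pd j f)) q)"
    by (rule arg_cong)
  also have "\<dots> = pd i (pd j f)"
    using f by (simp add: pd_add_fun pd_set_coord_fun pd_antideriv smooth3_pd smooth3_set_coord
        smooth3_antideriv)
  finally show ?thesis by simp
qed simp

section \<open>Functions on the torus\<close>

lemma tfun_periodic: "tfun g \<Longrightarrow> g (q + axis j (2*pi)) = g q"
  unfolding tfun_def periodic3_def by blast

lemma tfun_smooth3: "tfun g \<Longrightarrow> smooth3 g"
  unfolding tfun_def by blast

lemma tfun_const: "tfun (\<lambda>q. c)"
  unfolding tfun_def periodic3_def using smooth3_const by simp

lemma tfun_add: "tfun f \<Longrightarrow> tfun g \<Longrightarrow> tfun (\<lambda>q. f q + g q)"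
  unfolding tfun_def periodic3_def by (auto intro: smooth3_add)

lemma tfun_diff: "tfun f \<Longrightarrow> tfun g \<Longrightarrow> tfun (\<lambda>q. f q - g q)"
  unfolding tfun_def periodic3_def by (auto intro: smooth3_diff)

lemma tfun_mult: "tfun f \<Longrightarrow> tfun g \<Longrightarrow> tfun (\<lambda>q. f q * g q)"
  unfolding tfun_def periodic3_def by (auto intro: smooth3_mult)

lemma tfun_cmult: "tfun f \<Longrightarrow> tfun (\<lambda>q. c * f q)"
  unfolding tfun_def periodic3_def by (auto intro: smooth3_cmult)

lemma tfun_of_z: "(\<And>x. f (x + 2*pi) = f x) \<Longrightarrow> smooth3 (\<lambda>q. f (q $ 3)) \<Longrightarrow> tfun (\<lambda>q. f (q $ 3))"
  unfolding tfun_def periodic3_def by (auto simp: axis_def)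

lemma tfun_cos_z: "tfun (\<lambda>q. cos (q $ 3))"
  by (rule tfun_of_z) (simp_all add: smooth3_cos_z)

lemma tfun_sin_z: "tfun (\<lambda>q. sin (q $ 3))"
  by (rule tfun_of_z) (simp_all add: smooth3_sin_z)

lemma pd_translate_invariant:
  assumes "\<And>q. f differentiable (at q)" "\<And>q. f (q + v) = f q"
  shows "pd i f (p + v) = pd i f p"
proof -
  have "pd i f (p + v) = pd i (\<lambda>q. f (q + v)) p"
    using pd_translate assms(1) by metis
  also have "(\<lambda>q. f (q + v)) = f"
    using assms(2) by auto
  finally show ?thesis .
qed

lemma tfun_pd: "tfun f \<Longrightarrow> tfun (pd i f)"
  unfolding tfun_def periodic3_def using pd_translate_invariant smooth3_pd smooth3_differentiable by metis

lemma tvec_nth: "tvec a \<Longrightarrow> tfun (\<lambda>q. a q $ i)"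
  by (simp add: tvec_def)

lemma tvec_const: "tvec (\<lambda>p. v)"
  unfolding tvec_def using tfun_const by simp

text \<open>A constant 2-form c dx_j \<and> dx_k is exact only for c = 0: the antiderivatives in x_k and
  then x_j express the integral of c over the coordinate 2-torus through periodic functions.\<close>

lemma periodic_pd_diff_constant_eq_0:
  assumes u: "tfun u" and w: "tfun w" and jk: "j \<noteq> k"
    and h: "\<And>p. pd j u p - pd k w p = c"
  shows "c = 0"
proof -
  have su: "smooth3 u" and sw: "smooth3 w"
    using u w tfun_smooth3 by auto
  define ps :: "real^3" where "ps = set_coord j (2*pi) (set_coord k (2*pi) 0)"
  have psj: "ps $ j = 2*pi" and psk: "ps $ k = 2*pi"
    using jk by (auto simp: ps_def)
  have e1: "(\<lambda>q. 1 * pd j u q + (-1) * pd k w q) = (\<lambda>q. c)"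
    using h by simp
  have "antideriv j (\<lambda>q. c) q = 1 * antideriv j (pd j u) q + (-1) * antideriv j (pd k w) q" for q
    unfolding e1[symmetric] by (rule antideriv_linear) (auto intro: smooth3_pd su sw)
  then have e2: "(\<lambda>q. c * q $ j) = (\<lambda>q. 1 * (u q - u (set_coord j 0 q)) + (-1) * pd k (antideriv j w) q)"
    using jk by (auto simp: antideriv_const antideriv_pd[OF su] pd_antideriv[OF sw] mult.commute)
  have sm1: "smooth3 (\<lambda>q. u q - u (set_coord j 0 q))"
    using su by (intro smooth3_diff smooth3_set_coord)
  have sm2: "smooth3 (pd k (antideriv j w))"
    using sw by (intro smooth3_pd smooth3_antideriv)
  have "c * ps $ j * ps $ k = antideriv k (\<lambda>q. c * q $ j) ps"
    using antideriv_vec_nth[OF jk] by simp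
  also have "\<dots> = 1 * antideriv k (\<lambda>q. u q - u (set_coord j 0 q)) ps
      + (-1) * antideriv k (pd k (antideriv j w)) ps"
    unfolding e2 by (rule antideriv_linear[OF sm1 sm2])
  also have "antideriv k (\<lambda>q. u q - u (set_coord j 0 q)) ps =
      1 * antideriv k u ps + (-1) * antideriv k (\<lambda>q. u (set_coord j 0 q)) ps"
    using antideriv_linear[OF su smooth3_set_coord[OF su], where k=k and a=1 and b="-1" and p=ps] by simp
  also have "antideriv k (\<lambda>q. u (set_coord j 0 q)) ps = antideriv k u (set_coord j 0 ps)"
    using antideriv_set_coord jk by blast
  also have "\<dots> = antideriv k u (set_coord j 0 ps + axis j (2*pi))"
    by (rule antideriv_translate[symmetric]) (use jk u in \<open>auto simp: axis_nth_other tfun_periodic\<close>)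
  also have "set_coord j 0 ps + axis j (2*pi) = ps"
    using psj by (auto simp: vec_eq_iff axis_def)
  also have "antideriv k (pd k (antideriv j w)) ps = antideriv j w ps - antideriv j w (set_coord k 0 ps)"
    by (rule antideriv_pd) (intro smooth3_antideriv sw)
  also have "antideriv j w (set_coord k 0 ps) = antideriv j w (set_coord k 0 ps + axis k (2*pi))"
    by (rule antideriv_translate[symmetric]) (use jk w in \<open>auto simp: axis_nth_other tfun_periodic\<close>)
  also have "set_coord k 0 ps + axis k (2*pi) = ps"
    using psk by (auto simp: vec_eq_iff axis_def)
  finally have "c * (2*pi) * (2*pi) = 0"
    using psj psk by simp
  then show ?thesis by simp
qed

lemma interior3_nth:
  "interior3 V m p $ 1 $ 1 = 0" "interior3 V m p $ 2 $ 2 = 0" "interior3 V m p $ 3 $ 3 = 0"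
  "interior3 V m p $ 1 $ 2 = m p * V p $ 3" "interior3 V m p $ 2 $ 1 = - m p * V p $ 3"
  "interior3 V m p $ 1 $ 3 = - m p * V p $ 2" "interior3 V m p $ 3 $ 1 = m p * V p $ 2"
  "interior3 V m p $ 2 $ 3 = m p * V p $ 1" "interior3 V m p $ 3 $ 2 = - m p * V p $ 1"
  unfolding interior3_def by (simp_all add: det_3 axis_def)

lemma interior3_antisym: "interior3 V m p $ i $ j = - interior3 V m p $ j $ i"
  by (cases i rule: cases_3; cases j rule: cases_3) (simp_all add: interior3_nth)

lemma d1_antisym: "d1 a p $ i $ j = - d1 a p $ j $ i"
  by (simp add: d1_def)

lemma antisym_mat3_eqI:
  fixes M N :: "real^3^3"
  assumes "\<And>i j. M $ i $ j = - M $ j $ i" "\<And>i j. N $ i $ j = - N $ j $ i"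
    "M $ 1 $ 2 = N $ 1 $ 2" "M $ 1 $ 3 = N $ 1 $ 3" "M $ 2 $ 3 = N $ 2 $ 3"
  shows "M = N"
proof -
  have "M $ i $ i = 0" "N $ i $ i = 0" for i
    using assms(1)[of i i] assms(2)[of i i] by auto
  then show ?thesis
    unfolding vec_eq_iff forall_3 using assms by (metis minus_equation_iff)
qed

section \<open>The contact form \<theta>0\<close>

lemma theta0_nth [simp]: "theta0 q $ 1 = cos (q $ 3)" "theta0 q $ 2 = sin (q $ 3)" "theta0 q $ 3 = 0"
  by (simp_all add: theta0_def)

lemma pd_horizontal_theta0: "i \<noteq> 3 \<Longrightarrow> pd i (\<lambda>q. theta0 q $ j) p = 0"
  by (cases j rule: cases_3) (simp_all add: pd_cos_z pd_sin_z pd_const)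

lemma d1_theta0: "d1 theta0 p $ i $ j =
   (if i = 1 \<and> j = 3 then sin (p $ 3) else if i = 3 \<and> j = 1 then - sin (p $ 3)
    else if i = 2 \<and> j = 3 then - cos (p $ 3) else if i = 3 \<and> j = 2 then cos (p $ 3) else 0)"
  unfolding d1_def
  by (cases i rule: cases_3; cases j rule: cases_3) (simp_all add: pd_cos_z pd_sin_z pd_const)

lemma sin_cos_sq_add: "sin x * sin x + cos x * cos (x::real) = 1"
  using sin_cos_squared_add[of x] by (simp add: power2_eq_square)

lemma wedge12_theta0: "wedge12 theta0 (d1 theta0) p = -1"
  using sin_cos_sq_add[of "p $ 3"] unfolding wedge12_def by (simp add: d1_theta0 algebra_simps)

lemma mu_theta0: "mu theta0 p = -1/2"
  by (simp add: mu_def wedge12_theta0)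

lemma mu_theta0_fun: "mu theta0 = (\<lambda>p. -1/2)"
  by (simp add: fun_eq_iff mu_theta0)

lemma tvec_theta0: "tvec theta0"
  unfolding tvec_def forall_3 using tfun_cos_z tfun_sin_z tfun_const by simp

lemma contact_form_theta0: "contact_form theta0"
  unfolding contact_form_def using tvec_theta0 wedge12_theta0 by simp

lemma lie1_const_theta0: "lie1 (\<lambda>p. v) theta0 p $ j = v $ 3 * pd 3 (\<lambda>q. theta0 q $ j) p"
  unfolding lie1_def by (simp add: sum_3 pd_horizontal_theta0 pd_const)

lemma const_strict_contact_theta0: "v $ 3 = 0 \<Longrightarrow> (\<lambda>p. v) \<in> strict_contact theta0"
  unfolding strict_contact_def using tvec_const by (auto simp: vec_eq_iff lie1_const_theta0)

lemma dX_strict_contact: "dX \<in> strict_contact theta0"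
  using const_strict_contact_theta0[of "axis 1 1"] by (simp add: dX_def[abs_def] axis_def)

lemma dY_strict_contact: "dY \<in> strict_contact theta0"
  using const_strict_contact_theta0[of "axis 2 1"] by (simp add: dY_def[abs_def] axis_def)

lemma reeb_theta0:
  assumes "reeb theta0 R"
  shows "R p = vector [cos (p $ 3), sin (p $ 3), 0]"
proof -
  let ?c = "cos (p $ 3)" and ?s = "sin (p $ 3)"
  have r: "theta0 p \<bullet> R p = 1" "\<And>j. (\<Sum>i\<in>UNIV. R p $ i * d1 theta0 p $ i $ j) = 0"
    using assms unfolding reeb_def by auto
  have e0: "?c * R p $ 1 + ?s * R p $ 2 = 1" using r(1) by (simp add: inner_vec_def sum_3)
  have e1: "R p $ 3 * ?s = 0" using r(2)[of 1] by (simp add: sum_3 d1_theta0)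
  have e2: "R p $ 3 * ?c = 0" using r(2)[of 2] by (simp add: sum_3 d1_theta0)
  have e3: "R p $ 1 * ?s - R p $ 2 * ?c = 0" using r(2)[of 3] by (simp add: sum_3 d1_theta0)
  have sc: "?s * ?s + ?c * ?c = 1" by (rule sin_cos_sq_add)
  have "R p $ 3 = (R p $ 3 * ?s) * ?s + (R p $ 3 * ?c) * ?c" using sc by algebra
  then have z: "R p $ 3 = 0" using e1 e2 by simp
  have "R p $ 1 = ?c * (?c * R p $ 1 + ?s * R p $ 2) + ?s * (R p $ 1 * ?s - R p $ 2 * ?c)"
    using sc by algebra
  then have x: "R p $ 1 = ?c" using e0 e3 by simp
  have "R p $ 2 = ?s * (?c * R p $ 1 + ?s * R p $ 2) - ?c * (R p $ 1 * ?s - R p $ 2 * ?c)"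
    using sc by algebra
  then have y: "R p $ 2 = ?s" using e0 e3 by simp
  show ?thesis using x y z by (simp add: vec_eq_iff forall_3)
qed

lemma has_vector_derivative_horizontal_line:
  "((\<lambda>t. vector [t * a, t * b, c] :: real^3) has_vector_derivative vector [a, b, 0]) (at t)"
proof -
  have "(\<lambda>t. vector [t * a, t * b, c] :: real^3) = (\<lambda>t. t *\<^sub>R vector [a, b, 0] + vector [0, 0, c])"
    by (auto simp: vec_eq_iff forall_3)
  then show ?thesis by (auto intro!: derivative_eq_intros)
qed

text \<open>Reeb orbits are the horizontal lines of direction (cos z, sin z); the x-displacement
  T cos z after a common period T would have to lie in 2\<pi>\<int> for every z, which fails for the z
  with T cos z = \<pi>.\<close>

lemma not_regular_theta0: "\<not> regular theta0"
proof
  assume "regular theta0"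
  then obtain R T where R: "reeb theta0 R" and T: "T > 0" and
    per: "\<And>\<gamma>. (\<forall>t. (\<gamma> has_vector_derivative R (\<gamma> t)) (at t)) \<Longrightarrow> teq (\<gamma> (0 + T)) (\<gamma> 0)"
    unfolding regular_def by blast
  have displacement: "\<exists>k::int. T * cos c = 2 * pi * k" for c
  proof -
    define \<gamma> where "\<gamma> t = (vector [t * cos c, t * sin c, c] :: real^3)" for t
    have "(\<gamma> has_vector_derivative R (\<gamma> t)) (at t)" for t
      using has_vector_derivative_horizontal_line[of "cos c" "sin c" c t] reeb_theta0[OF R, of "\<gamma> t"]
      by (simp add: \<gamma>_def[abs_def] \<gamma>_def)
    then have "teq (\<gamma> (0 + T)) (\<gamma> 0)" using per by blast
    then obtain k :: int where "\<gamma> (0 + T) $ 1 - \<gamma> 0 $ 1 = 2 * pi * k"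
      unfolding teq_def by blast
    then show ?thesis by (auto simp: \<gamma>_def)
  qed
  obtain k1 :: int where k1: "T = 2 * pi * k1"
    using displacement[of 0] by auto
  have "k1 \<ge> 1"
    using k1 T by (smt (verit, best) mult_nonneg_nonpos of_int_le_0_iff pi_gt_zero)
  then have T2: "T \<ge> 2 * pi"
    using k1 by (simp add: mult_le_cancel_left1)
  define c where "c = arccos (pi / T)"
  have "0 < pi / T" "pi / T \<le> 1"
    using T T2 by (auto simp: field_simps)
  then have "cos c = pi / T"
    unfolding c_def by (intro cos_arccos) auto
  then have "T * cos c = pi"
    using T by simp
  with displacement[of c] obtain k2 :: int where "pi = 2 * pi * k2"
    by auto
  then have "(1::int) = 2 * k2"
    by (metis mult_cancel_right1 of_int_1 of_int_eq_iff of_int_mult of_int_numeral pi_neq_zero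
        mult.assoc mult.commute)
  then show False by presburger
qed

section \<open>Strict contact fields of \<theta>0\<close>

lemma strict_contact_tfun: "X \<in> strict_contact th \<Longrightarrow> tfun (\<lambda>q. X q $ i)"
  by (simp add: strict_contact_def tvec_def)

lemma strict_contact_smooth3: "X \<in> strict_contact th \<Longrightarrow> smooth3 (\<lambda>q. X q $ i)"
  using strict_contact_tfun tfun_smooth3 by blast

lemma lie1_theta0:
  "lie1 X theta0 p $ 1 = - sin (p $ 3) * X p $ 3
     + cos (p $ 3) * pd 1 (\<lambda>q. X q $ 1) p + sin (p $ 3) * pd 1 (\<lambda>q. X q $ 2) p"
  "lie1 X theta0 p $ 2 = cos (p $ 3) * X p $ 3
     + cos (p $ 3) * pd 2 (\<lambda>q. X q $ 1) p + sin (p $ 3) * pd 2 (\<lambda>q. X q $ 2) p"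
  "lie1 X theta0 p $ 3 = cos (p $ 3) * pd 3 (\<lambda>q. X q $ 1) p + sin (p $ 3) * pd 3 (\<lambda>q. X q $ 2) p"
  unfolding lie1_def by (simp_all add: sum_3 pd_cos_z pd_sin_z pd_const)

lemma strict_contact_add_const:
  assumes X: "X \<in> strict_contact theta0" and v: "v $ 3 = 0"
  shows "(\<lambda>p. X p + v) \<in> strict_contact theta0"
proof -
  have "pd i (\<lambda>q. (X q + v) $ j) = pd i (\<lambda>q. X q $ j)" for i j
    using strict_contact_smooth3[OF X] by (simp add: pd_add_fun smooth3_const pd_const_fun)
  then have "lie1 (\<lambda>p. X p + v) theta0 = lie1 X theta0"
    unfolding lie1_def using v by (auto simp: vec_eq_iff sum_3 pd_horizontal_theta0)
  moreover have "tvec (\<lambda>p. X p + v)"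
    using X unfolding tvec_def strict_contact_def by (auto intro!: tfun_add tfun_const)
  ultimately show ?thesis
    using X by (simp add: strict_contact_def)
qed

lemma strict_contact_sub_dX_dY:
  assumes "X \<in> strict_contact theta0"
  shows "(\<lambda>p. X p - a *\<^sub>R dX p - b *\<^sub>R dY p) \<in> strict_contact theta0"
proof -
  have "(\<lambda>p. X p - a *\<^sub>R dX p - b *\<^sub>R dY p) = (\<lambda>p. X p + (- a *\<^sub>R axis 1 1 - b *\<^sub>R axis 2 1))"
    by (auto simp: dX_def dY_def)
  moreover have "(- a *\<^sub>R axis 1 1 - b *\<^sub>R axis 2 1 :: real^3) $ 3 = 0"
    by (simp add: axis_def)
  ultimately show ?thesis
    using strict_contact_add_const[OF assms] by presburger
qed

lemma sub_dX_dY_nth: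
  "(X p - a *\<^sub>R dX p - b *\<^sub>R dY p) $ 1 = X p $ 1 - a"
  "(X p - a *\<^sub>R dX p - b *\<^sub>R dY p) $ 2 = X p $ 2 - b"
  "(X p - a *\<^sub>R dX p - b *\<^sub>R dY p) $ 3 = X p $ 3"
  by (simp_all add: dX_def dY_def axis_def)

lemma rotation_inverse:
  fixes x y z s c :: real
  assumes "s * s + c * c = 1"
  shows "x = c * (c * x + s * y) - s * (- s * x + c * y)"
    "y = s * (c * x + s * y) + c * (- s * x + c * y)"
    "z = s * (s * z) - c * (- c * z)"
  using assms by algebra+

definition contact_ham :: "(real^3 \<Rightarrow> real^3) \<Rightarrow> real^3 \<Rightarrow> real" where
  "contact_ham X q = cos (q $ 3) * X q $ 1 + sin (q $ 3) * X q $ 2"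

definition ham_sin :: "(real^3 \<Rightarrow> real^3) \<Rightarrow> real^3 \<Rightarrow> real" where
  "ham_sin X q = contact_ham X q * sin (q $ 3)"

definition ham_cos :: "(real^3 \<Rightarrow> real^3) \<Rightarrow> real^3 \<Rightarrow> real" where
  "ham_cos X q = contact_ham X q * cos (q $ 3)"

definition ham_sin_int :: "(real^3 \<Rightarrow> real^3) \<Rightarrow> real^3 \<Rightarrow> real" where
  "ham_sin_int X = antideriv 3 (ham_sin X)"

definition ham_cos_int :: "(real^3 \<Rightarrow> real^3) \<Rightarrow> real^3 \<Rightarrow> real" where
  "ham_cos_int X = antideriv 3 (ham_cos X)"

definition ham_sin_period :: "(real^3 \<Rightarrow> real^3) \<Rightarrow> real^3 \<Rightarrow> real" where
  "ham_sin_period X q = ham_sin_int X (set_coord 3 (2*pi) q)"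

definition ham_cos_period :: "(real^3 \<Rightarrow> real^3) \<Rightarrow> real^3 \<Rightarrow> real" where
  "ham_cos_period X q = ham_cos_int X (set_coord 3 (2*pi) q)"

definition ham_sin_period0 :: "(real^3 \<Rightarrow> real^3) \<Rightarrow> real^3 \<Rightarrow> real" where
  "ham_sin_period0 X q = ham_sin_period X (set_coord 2 0 q)"

text \<open>The z-antiderivatives of f sin z and f cos z, made periodic by subtracting the linear
  growth z/2\<pi> times their periods, give the dx and dy parts of the primitive.  The dz part
  repeats this with x- and y-antiderivatives of the periods; their full-period integrals do not
  depend on the point and become the coefficients of \<partial>_x and \<partial>_y.\<close>

definition prim_x :: "(real^3 \<Rightarrow> real^3) \<Rightarrow> real^3 \<Rightarrow> real" where
  "prim_x X q = - ham_sin_int X q + q $ 3 * ham_sin_period X q / (2*pi)"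

definition prim_y :: "(real^3 \<Rightarrow> real^3) \<Rightarrow> real^3 \<Rightarrow> real" where
  "prim_y X q = ham_cos_int X q - q $ 3 * ham_cos_period X q / (2*pi)"

definition prim_z :: "(real^3 \<Rightarrow> real^3) \<Rightarrow> real \<Rightarrow> real \<Rightarrow> real^3 \<Rightarrow> real" where
  "prim_z X a b q = antideriv 1 (ham_sin_period0 X) q / (2*pi) - b / 2 * q $ 1
     - antideriv 2 (ham_cos_period X) q / (2*pi) + a / 2 * q $ 2"

definition dX_coeff :: "(real^3 \<Rightarrow> real^3) \<Rightarrow> real" where
  "dX_coeff X = antideriv 2 (ham_cos_period X) (set_coord 2 (2*pi) 0) / (2*pi^2)"

definition dY_coeff :: "(real^3 \<Rightarrow> real^3) \<Rightarrow> real" where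
  "dY_coeff X = antideriv 1 (ham_sin_period0 X) (set_coord 1 (2*pi) 0) / (2*pi^2)"

definition reduced_primitive :: "(real^3 \<Rightarrow> real^3) \<Rightarrow> real^3 \<Rightarrow> real^3" where
  "reduced_primitive X q = vector [-(1/2) * contact_ham X q * cos (q $ 3) + prim_x X q,
     -(1/2) * contact_ham X q * sin (q $ 3) + prim_y X q, prim_z X (dX_coeff X) (dY_coeff X) q]"

lemma reduced_primitive_components:
  "(\<lambda>q. reduced_primitive X q $ 1) = (\<lambda>q. -(1/2) * contact_ham X q * cos (q $ 3) + prim_x X q)"
  "(\<lambda>q. reduced_primitive X q $ 2) = (\<lambda>q. -(1/2) * contact_ham X q * sin (q $ 3) + prim_y X q)"
  "(\<lambda>q. reduced_primitive X q $ 3) = prim_z X (dX_coeff X) (dY_coeff X)"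
  by (auto simp: reduced_primitive_def)

context
  fixes X assumes X: "X \<in> strict_contact theta0"
begin

lemma tfun_contact_ham: "tfun (contact_ham X)"
  unfolding contact_ham_def[abs_def] using X
  by (intro tfun_add tfun_mult tfun_cos_z tfun_sin_z strict_contact_tfun)

lemma smooth3_contact_ham: "smooth3 (contact_ham X)"
  using tfun_contact_ham tfun_smooth3 by blast

lemma pd_contact_ham:
  "pd 1 (contact_ham X) p = sin (p $ 3) * X p $ 3"
  "pd 2 (contact_ham X) p = - cos (p $ 3) * X p $ 3"
  "pd 3 (contact_ham X) p = - sin (p $ 3) * X p $ 1 + cos (p $ 3) * X p $ 2"
proof -
  have "lie1 X theta0 p $ j = 0" for j
    using X unfolding strict_contact_def by simp
  note lie = this[of 1, unfolded lie1_theta0] this[of 2, unfolded lie1_theta0]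
    this[of 3, unfolded lie1_theta0]
  have "pd i (contact_ham X) p = (if i = 3 then - sin (p $ 3) else 0) * X p $ 1
      + cos (p $ 3) * pd i (\<lambda>q. X q $ 1) p
      + ((if i = 3 then cos (p $ 3) else 0) * X p $ 2 + sin (p $ 3) * pd i (\<lambda>q. X q $ 2) p)" for i
    unfolding contact_ham_def[abs_def] using strict_contact_smooth3[OF X]
    by (simp add: smooth3_intros pd_fun_simps)
  then show "pd 1 (contact_ham X) p = sin (p $ 3) * X p $ 3"
    "pd 2 (contact_ham X) p = - cos (p $ 3) * X p $ 3"
    "pd 3 (contact_ham X) p = - sin (p $ 3) * X p $ 1 + cos (p $ 3) * X p $ 2"
    using lie by (auto simp: algebra_simps)
qed

text \<open>X = f R + (the Hamiltonian field of f), and the Reeb derivative of f vanishes.\<close>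

lemma strict_contact_theta0_by_ham:
  "X p $ 1 = cos (p $ 3) * contact_ham X p - sin (p $ 3) * pd 3 (contact_ham X) p"
  "X p $ 2 = sin (p $ 3) * contact_ham X p + cos (p $ 3) * pd 3 (contact_ham X) p"
  "X p $ 3 = sin (p $ 3) * pd 1 (contact_ham X) p - cos (p $ 3) * pd 2 (contact_ham X) p"
  "cos (p $ 3) * pd 1 (contact_ham X) p + sin (p $ 3) * pd 2 (contact_ham X) p = 0"
  unfolding pd_contact_ham contact_ham_def
  using rotation_inverse[OF sin_cos_sq_add[of "p $ 3"]] by (simp_all add: algebra_simps)


lemma tfun_ham_sin: "tfun (ham_sin X)"
  unfolding ham_sin_def[abs_def] by (intro tfun_mult tfun_contact_ham tfun_sin_z)

lemma tfun_ham_cos: "tfun (ham_cos X)"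
  unfolding ham_cos_def[abs_def] by (intro tfun_mult tfun_contact_ham tfun_cos_z)

lemma smooth3_ham_sin: "smooth3 (ham_sin X)"
  using tfun_ham_sin tfun_smooth3 by blast

lemma smooth3_ham_cos: "smooth3 (ham_cos X)"
  using tfun_ham_cos tfun_smooth3 by blast

lemma smooth3_ham_sin_int: "smooth3 (ham_sin_int X)"
  unfolding ham_sin_int_def by (intro smooth3_antideriv smooth3_ham_sin)

lemma smooth3_ham_cos_int: "smooth3 (ham_cos_int X)"
  unfolding ham_cos_int_def by (intro smooth3_antideriv smooth3_ham_cos)

lemma smooth3_ham_sin_period: "smooth3 (ham_sin_period X)"
  unfolding ham_sin_period_def[abs_def] by (intro smooth3_set_coord smooth3_ham_sin_int)

lemma smooth3_ham_cos_period: "smooth3 (ham_cos_period X)"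
  unfolding ham_cos_period_def[abs_def] by (intro smooth3_set_coord smooth3_ham_cos_int)

lemma smooth3_ham_sin_period0: "smooth3 (ham_sin_period0 X)"
  unfolding ham_sin_period0_def[abs_def] by (intro smooth3_set_coord smooth3_ham_sin_period)

lemma ham_sin_int_translate_xy: "j \<noteq> 3 \<Longrightarrow> ham_sin_int X (q + axis j (2*pi)) = ham_sin_int X q"
  unfolding ham_sin_int_def
  by (rule antideriv_translate) (auto simp: axis_nth_other tfun_periodic[OF tfun_ham_sin])

lemma ham_cos_int_translate_xy: "j \<noteq> 3 \<Longrightarrow> ham_cos_int X (q + axis j (2*pi)) = ham_cos_int X q"
  unfolding ham_cos_int_def
  by (rule antideriv_translate) (auto simp: axis_nth_other tfun_periodic[OF tfun_ham_cos])

lemma ham_sin_int_translate_z: "ham_sin_int X (q + axis 3 (2*pi)) = ham_sin_int X q + ham_sin_period X q"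
  unfolding ham_sin_int_def ham_sin_period_def
  by (rule antideriv_add_period[OF smooth3_ham_sin tfun_periodic[OF tfun_ham_sin]])

lemma ham_cos_int_translate_z: "ham_cos_int X (q + axis 3 (2*pi)) = ham_cos_int X q + ham_cos_period X q"
  unfolding ham_cos_int_def ham_cos_period_def
  by (rule antideriv_add_period[OF smooth3_ham_cos tfun_periodic[OF tfun_ham_cos]])

lemma ham_sin_period_periodic: "ham_sin_period X (q + axis j (2*pi)) = ham_sin_period X q"
  by (cases "j = 3")
    (auto simp: ham_sin_period_def set_coord_add_axis_same set_coord_add_axis_other ham_sin_int_translate_xy)

lemma ham_cos_period_periodic: "ham_cos_period X (q + axis j (2*pi)) = ham_cos_period X q"
  by (cases "j = 3")
    (auto simp: ham_cos_period_def set_coord_add_axis_same set_coord_add_axis_other ham_cos_int_translate_xy)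

lemma ham_sin_period0_periodic: "ham_sin_period0 X (q + axis j (2*pi)) = ham_sin_period0 X q"
  by (cases "j = 2")
    (auto simp: ham_sin_period0_def set_coord_add_axis_same set_coord_add_axis_other ham_sin_period_periodic)

lemma ham_cos_period_set_z: "ham_cos_period X (set_coord 3 c q) = ham_cos_period X q"
  by (simp add: ham_cos_period_def)

lemma ham_sin_period0_set_y: "ham_sin_period0 X (set_coord 2 c q) = ham_sin_period0 X q"
  by (simp add: ham_sin_period0_def)

lemma ham_sin_period0_set_z: "ham_sin_period0 X (set_coord 3 c q) = ham_sin_period0 X q"
  by (simp add: ham_sin_period0_def ham_sin_period_def set_coord_commute[of 2 3])

lemma pd_ham_sin_int: "pd i (ham_sin_int X) = (if i = 3 then ham_sin X else antideriv 3 (pd i (ham_sin X)))"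
  unfolding ham_sin_int_def by (simp add: pd_antideriv smooth3_ham_sin)

lemma pd_ham_cos_int: "pd i (ham_cos_int X) = (if i = 3 then ham_cos X else antideriv 3 (pd i (ham_cos X)))"
  unfolding ham_cos_int_def by (simp add: pd_antideriv smooth3_ham_cos)

lemma pd_ham_sin_period:
  "pd i (ham_sin_period X) q = (if i = 3 then 0 else pd i (ham_sin_int X) (set_coord 3 (2*pi) q))"
  unfolding ham_sin_period_def[abs_def] by (simp add: pd_set_coord_fun smooth3_ham_sin_int)

lemma pd_ham_cos_period:
  "pd i (ham_cos_period X) q = (if i = 3 then 0 else pd i (ham_cos_int X) (set_coord 3 (2*pi) q))"
  unfolding ham_cos_period_def[abs_def] by (simp add: pd_set_coord_fun smooth3_ham_cos_int)

lemma planar_div_ham_eq_0: "pd 1 (ham_cos X) q + pd 2 (ham_sin X) q = 0"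
proof -
  have "pd 1 (ham_cos X) q + pd 2 (ham_sin X) q =
      cos (q $ 3) * pd 1 (contact_ham X) q + sin (q $ 3) * pd 2 (contact_ham X) q"
    unfolding ham_cos_def[abs_def] ham_sin_def[abs_def]
    by (simp add: smooth3_contact_ham smooth3_intros pd_fun_simps)
  then show ?thesis
    using strict_contact_theta0_by_ham(4) by simp
qed

lemma planar_div_ham_int_eq_0: "pd 1 (ham_cos_int X) q + pd 2 (ham_sin_int X) q = 0"
proof -
  have "pd 1 (ham_cos_int X) q + pd 2 (ham_sin_int X) q =
      antideriv 3 (pd 1 (ham_cos X)) q + antideriv 3 (pd 2 (ham_sin X)) q"
    by (simp add: pd_ham_cos_int pd_ham_sin_int)
  also have "\<dots> = antideriv 3 (\<lambda>q. 1 * pd 1 (ham_cos X) q + 1 * pd 2 (ham_sin X) q) q"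
    using antideriv_linear[OF smooth3_pd[OF smooth3_ham_cos] smooth3_pd[OF smooth3_ham_sin],
        where k=3 and a=1 and b=1 and p=q] by simp
  also have "(\<lambda>q. 1 * pd 1 (ham_cos X) q + 1 * pd 2 (ham_sin X) q) = (\<lambda>q. 0)"
    using planar_div_ham_eq_0 by simp
  finally show ?thesis
    by (simp add: antideriv_zero)
qed

lemma pd_x_ham_cos_period: "pd 1 (ham_cos_period X) q = - pd 2 (ham_sin_period X) q"
  using planar_div_ham_int_eq_0[of "set_coord 3 (2*pi) q"]
  by (simp add: pd_ham_sin_period pd_ham_cos_period eq_neg_iff_add_eq_0)

lemma smooth3_prim_x: "smooth3 (prim_x X)"
  unfolding prim_x_def[abs_def] by (simp add: smooth3_ham_sin_int smooth3_ham_sin_period smooth3_intros)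

lemma smooth3_prim_y: "smooth3 (prim_y X)"
  unfolding prim_y_def[abs_def] by (simp add: smooth3_ham_cos_int smooth3_ham_cos_period smooth3_intros)

lemma smooth3_prim_z: "smooth3 (prim_z X a b)"
  unfolding prim_z_def[abs_def]
  by (simp add: smooth3_antideriv smooth3_ham_cos_period smooth3_ham_sin_period0 smooth3_intros)

lemma tfun_prim_x: "tfun (prim_x X)"
proof -
  have "prim_x X (q + axis j (2*pi)) = prim_x X q" for q j
  proof (cases "j = 3")
    case True
    then show ?thesis
      using ham_sin_int_translate_z[of q] ham_sin_period_periodic[of q 3]
      by (simp add: prim_x_def field_simps)
  next
    case False
    then show ?thesis
      using ham_sin_int_translate_xy[OF False] ham_sin_period_periodic[of q j]
      by (simp add: prim_x_def axis_nth_other)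
  qed
  then show ?thesis
    unfolding tfun_def periodic3_def using smooth3_prim_x by blast
qed

lemma tfun_prim_y: "tfun (prim_y X)"
proof -
  have "prim_y X (q + axis j (2*pi)) = prim_y X q" for q j
  proof (cases "j = 3")
    case True
    then show ?thesis
      using ham_cos_int_translate_z[of q] ham_cos_period_periodic[of q 3]
      by (simp add: prim_y_def field_simps)
  next
    case False
    then show ?thesis
      using ham_cos_int_translate_xy[OF False] ham_cos_period_periodic[of q j]
      by (simp add: prim_y_def axis_nth_other)
  qed
  then show ?thesis
    unfolding tfun_def periodic3_def using smooth3_prim_y by blast
qed

lemma dY_coeff_eq: "antideriv 1 (ham_sin_period0 X) (set_coord 1 (2*pi) q) = 2 * pi^2 * dY_coeff X"
proof -
  have "set_coord 1 (2*pi) q = set_coord 2 (q $ 2) (set_coord 3 (q $ 3) (set_coord 1 (2*pi) 0))"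
    by (auto simp: vec_eq_iff forall_3)
  moreover have "antideriv 1 (ham_sin_period0 X) (set_coord 2 c p) = antideriv 1 (ham_sin_period0 X) p"
    "antideriv 1 (ham_sin_period0 X) (set_coord 3 c p) = antideriv 1 (ham_sin_period0 X) p" for c p
    by (rule antideriv_set_coord_invariant; simp add: ham_sin_period0_set_y ham_sin_period0_set_z)+
  ultimately show ?thesis
    by (simp add: dY_coeff_def)
qed

text \<open>The y-period of the y-antiderivative of the z-period of f cos z is constant in x because
  its x-derivative is the y-period of the z-period of f sin z, which vanishes.\<close>

lemma dX_coeff_eq: "antideriv 2 (ham_cos_period X) (set_coord 2 (2*pi) q) = 2 * pi^2 * dX_coeff X"
proof -
  define Q where "Q q = antideriv 2 (ham_cos_period X) (set_coord 2 (2*pi) q)" for q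
  have "smooth3 Q"
    unfolding Q_def[abs_def] by (intro smooth3_set_coord smooth3_antideriv smooth3_ham_cos_period)
  moreover have "pd 1 Q p = 0" for p
  proof -
    let ?u = "set_coord 2 (2*pi) p"
    have "pd 1 Q p = antideriv 2 (pd 1 (ham_cos_period X)) ?u"
      unfolding Q_def[abs_def]
      by (simp add: pd_set_coord_fun pd_antideriv smooth3_antideriv smooth3_ham_cos_period)
    also have "\<dots> = - antideriv 2 (pd 2 (ham_sin_period X)) ?u"
      unfolding pd_x_ham_cos_period by (rule antideriv_minus) (intro smooth3_pd smooth3_ham_sin_period)
    also have "\<dots> = - (ham_sin_period X ?u - ham_sin_period X (set_coord 2 0 ?u))"
      using antideriv_pd[OF smooth3_ham_sin_period] by simp
    also have "ham_sin_period X ?u = ham_sin_period X (set_coord 2 0 ?u + axis 2 (2*pi))"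
      by (rule arg_cong[where f="ham_sin_period X"]) (auto simp: vec_eq_iff axis_def forall_3)
    also have "\<dots> = ham_sin_period X (set_coord 2 0 ?u)"
      by (rule ham_sin_period_periodic)
    finally show ?thesis by simp
  qed
  ultimately have "Q (set_coord 1 (q $ 1) 0) = Q (set_coord 1 0 0)"
    using set_coord_eq_if_pd_zero smooth3_differentiable by blast
  moreover have "Q (set_coord 3 c p) = Q p" for c p
    unfolding Q_def set_coord_commute[of 2 3, simplified]
    by (rule antideriv_set_coord_invariant) (auto simp: ham_cos_period_set_z)
  moreover have "Q q = Q (set_coord 3 (q $ 3) (set_coord 1 (q $ 1) 0))"
    unfolding Q_def
    by (rule arg_cong[where f="antideriv 2 (ham_cos_period X)"]) (auto simp: vec_eq_iff forall_3)
  moreover have "set_coord 1 0 0 = (0::real^3)"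
    by (auto simp: vec_eq_iff forall_3)
  ultimately show ?thesis
    by (simp add: Q_def dX_coeff_def)
qed

lemma tfun_prim_z: "tfun (prim_z X (dX_coeff X) (dY_coeff X))"
proof -
  have "prim_z X (dX_coeff X) (dY_coeff X) (q + axis j (2*pi)) = prim_z X (dX_coeff X) (dY_coeff X) q"
    for q j
  proof -
    have x_shift: "antideriv 1 (ham_sin_period0 X) (q + axis 1 (2*pi)) =
        antideriv 1 (ham_sin_period0 X) q + 2 * pi^2 * dY_coeff X"
      using antideriv_add_period[OF smooth3_ham_sin_period0 ham_sin_period0_periodic] dY_coeff_eq by simp
    have y_shift: "antideriv 2 (ham_cos_period X) (q + axis 2 (2*pi)) =
        antideriv 2 (ham_cos_period X) q + 2 * pi^2 * dX_coeff X"
      using antideriv_add_period[OF smooth3_ham_cos_period ham_cos_period_periodic] dX_coeff_eq by simp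
    have x_inv: "antideriv 1 (ham_sin_period0 X) (q + axis j (2*pi)) = antideriv 1 (ham_sin_period0 X) q"
      if "j \<noteq> 1" for j
      by (rule antideriv_translate) (use that in \<open>auto simp: axis_nth_other ham_sin_period0_periodic\<close>)
    have y_inv: "antideriv 2 (ham_cos_period X) (q + axis j (2*pi)) = antideriv 2 (ham_cos_period X) q"
      if "j \<noteq> 2" for j
      by (rule antideriv_translate) (use that in \<open>auto simp: axis_nth_other ham_cos_period_periodic\<close>)
    show ?thesis
    proof (cases j rule: cases_3)
      case 1
      then show ?thesis
        using x_shift y_inv[of 1] by (simp add: prim_z_def axis_def field_simps power2_eq_square)
    next
      case 2
      then show ?thesis
        using y_shift x_inv[of 2] by (simp add: prim_z_def axis_def field_simps power2_eq_square)
    next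
      case 3
      then show ?thesis
        using x_inv[of 3] y_inv[of 3] by (simp add: prim_z_def axis_nth_other)
    qed
  qed
  then show ?thesis
    unfolding tfun_def periodic3_def using smooth3_prim_z by blast
qed

lemma tvec_reduced_primitive: "tvec (reduced_primitive X)"
  unfolding tvec_def forall_3 reduced_primitive_components
  by (intro conjI tfun_add tfun_mult tfun_cmult tfun_contact_ham tfun_cos_z tfun_sin_z
      tfun_prim_x tfun_prim_y tfun_prim_z)

lemmas smooth3_primitive_parts = smooth3_contact_ham smooth3_prim_x smooth3_prim_y smooth3_prim_z
  smooth3_ham_sin_int smooth3_ham_cos_int smooth3_ham_sin_period smooth3_ham_cos_period
  smooth3_ham_sin_period0 smooth3_antideriv smooth3_intros

lemma pd1_reduced_primitive_2:
  "pd 1 (\<lambda>q. reduced_primitive X q $ 2) p = -(1/2) * (pd 1 (contact_ham X) p * sin (p $ 3))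
     + pd 1 (ham_cos_int X) p - p $ 3 * pd 1 (ham_cos_period X) p / (2*pi)"
  unfolding reduced_primitive_components prim_y_def[abs_def]
  by (simp add: smooth3_primitive_parts pd_fun_simps)

lemma pd2_reduced_primitive_1:
  "pd 2 (\<lambda>q. reduced_primitive X q $ 1) p = -(1/2) * (pd 2 (contact_ham X) p * cos (p $ 3))
     - pd 2 (ham_sin_int X) p + p $ 3 * pd 2 (ham_sin_period X) p / (2*pi)"
  unfolding reduced_primitive_components prim_x_def[abs_def]
  by (simp add: smooth3_primitive_parts pd_fun_simps)

lemma pd3_reduced_primitive_1:
  "pd 3 (\<lambda>q. reduced_primitive X q $ 1) p =
     -(1/2) * (pd 3 (contact_ham X) p * cos (p $ 3) - contact_ham X p * sin (p $ 3))
     - ham_sin X p + ham_sin_period X p / (2*pi)"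
  unfolding reduced_primitive_components prim_x_def[abs_def]
  by (simp add: smooth3_primitive_parts pd_fun_simps pd_ham_sin_int pd_ham_sin_period)

lemma pd3_reduced_primitive_2:
  "pd 3 (\<lambda>q. reduced_primitive X q $ 2) p =
     -(1/2) * (pd 3 (contact_ham X) p * sin (p $ 3) + contact_ham X p * cos (p $ 3))
     + ham_cos X p - ham_cos_period X p / (2*pi)"
  unfolding reduced_primitive_components prim_y_def[abs_def]
  by (simp add: smooth3_primitive_parts pd_fun_simps pd_ham_cos_int pd_ham_cos_period)

lemma pd1_reduced_primitive_3:
  "pd 1 (\<lambda>q. reduced_primitive X q $ 3) p = ham_sin_period X p / (2*pi) - dY_coeff X / 2"
proof -
  have "pd 1 (\<lambda>q. reduced_primitive X q $ 3) p =
      ham_sin_period0 X p / (2*pi) - dY_coeff X / 2 - antideriv 2 (pd 1 (ham_cos_period X)) p / (2*pi)"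
    unfolding reduced_primitive_components prim_z_def[abs_def]
    by (simp add: smooth3_primitive_parts pd_fun_simps pd_antideriv)
  moreover have "antideriv 2 (pd 1 (ham_cos_period X)) p = - (ham_sin_period X p - ham_sin_period0 X p)"
    unfolding pd_x_ham_cos_period antideriv_minus[OF smooth3_pd[OF smooth3_ham_sin_period]]
      antideriv_pd[OF smooth3_ham_sin_period] ham_sin_period0_def ..
  ultimately show ?thesis
    by (simp add: diff_divide_distrib)
qed

lemma pd2_reduced_primitive_3:
  "pd 2 (\<lambda>q. reduced_primitive X q $ 3) p = - ham_cos_period X p / (2*pi) + dX_coeff X / 2"
proof -
  have "pd 2 (ham_sin_period0 X) = (\<lambda>q. 0)"
    unfolding ham_sin_period0_def[abs_def] by (simp add: pd_set_coord_fun smooth3_primitive_parts)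
  then show ?thesis
    unfolding reduced_primitive_components prim_z_def[abs_def]
    by (simp add: smooth3_primitive_parts pd_fun_simps pd_antideriv antideriv_zero)
qed

lemma d1_reduced_primitive:
  "d1 (reduced_primitive X) = interior3 (\<lambda>p. X p - dX_coeff X *\<^sub>R dX p - dY_coeff X *\<^sub>R dY p) (mu theta0)"
    (is "_ = interior3 ?V _")
proof (rule ext, rule antisym_mat3_eqI[OF d1_antisym interior3_antisym])
  fix p
  have "pd 1 (ham_cos_int X) p = - pd 2 (ham_sin_int X) p"
    using planar_div_ham_int_eq_0[of p] by (simp add: eq_neg_iff_add_eq_0)
  then show "d1 (reduced_primitive X) p $ 1 $ 2 = interior3 ?V (mu theta0) p $ 1 $ 2"
    unfolding interior3_nth sub_dX_dY_nth mu_theta0 d1_def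
    by (simp add: pd1_reduced_primitive_2 pd2_reduced_primitive_1 pd_x_ham_cos_period
        strict_contact_theta0_by_ham(3) algebra_simps)
  show "d1 (reduced_primitive X) p $ 1 $ 3 = interior3 ?V (mu theta0) p $ 1 $ 3"
    unfolding interior3_nth sub_dX_dY_nth mu_theta0 d1_def
    by (simp add: pd1_reduced_primitive_3 pd3_reduced_primitive_1 strict_contact_theta0_by_ham(2)
        ham_sin_def algebra_simps)
  show "d1 (reduced_primitive X) p $ 2 $ 3 = interior3 ?V (mu theta0) p $ 2 $ 3"
    unfolding interior3_nth sub_dX_dY_nth mu_theta0 d1_def
    by (simp add: pd2_reduced_primitive_3 pd3_reduced_primitive_2 strict_contact_theta0_by_ham(1)
        ham_cos_def algebra_simps)
qed

lemma sub_dX_dY_exact_strict_contact: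
  "(\<lambda>p. X p - dX_coeff X *\<^sub>R dX p - dY_coeff X *\<^sub>R dY p) \<in> exact_strict_contact theta0"
  unfolding exact_strict_contact_def exact2_def
  using strict_contact_sub_dX_dY[OF X] tvec_reduced_primitive d1_reduced_primitive by blast

end

section \<open>The flux\<close>

lemma exact_const_2form_eq_0:
  assumes "exact2 (\<lambda>p. a *\<^sub>R basic2 2 3 p + b *\<^sub>R basic2 1 3 p)"
  shows "a = 0 \<and> b = 0"
proof -
  obtain \<alpha> where \<alpha>: "tvec \<alpha>" "d1 \<alpha> = (\<lambda>p. a *\<^sub>R basic2 2 3 p + b *\<^sub>R basic2 1 3 p)"
    using assms exact2_def by blast
  have "d1 \<alpha> p $ 2 $ 3 = a" "d1 \<alpha> p $ 1 $ 3 = b" for p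
    using \<alpha>(2) by (simp_all add: basic2_def)
  then have a: "pd 2 (\<lambda>q. \<alpha> q $ 3) p - pd 3 (\<lambda>q. \<alpha> q $ 2) p = a"
    and b: "pd 1 (\<lambda>q. \<alpha> q $ 3) p - pd 3 (\<lambda>q. \<alpha> q $ 1) p = b" for p
    by (simp_all add: d1_def)
  show ?thesis
    using periodic_pd_diff_constant_eq_0[OF tvec_nth[OF \<alpha>(1)] tvec_nth[OF \<alpha>(1)] _ a]
      periodic_pd_diff_constant_eq_0[OF tvec_nth[OF \<alpha>(1)] tvec_nth[OF \<alpha>(1)] _ b] by simp
qed

lemma sub_dX_dY_exact_unique:
  assumes "(\<lambda>p. X p - a *\<^sub>R dX p - b *\<^sub>R dY p) \<in> exact_strict_contact theta0"
    "(\<lambda>p. X p - a' *\<^sub>R dX p - b' *\<^sub>R dY p) \<in> exact_strict_contact theta0"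
  shows "a = a' \<and> b = b'"
proof -
  obtain \<alpha> where \<alpha>: "tvec \<alpha>" "d1 \<alpha> = interior3 (\<lambda>p. X p - a *\<^sub>R dX p - b *\<^sub>R dY p) (mu theta0)"
    using assms(1) unfolding exact_strict_contact_def exact2_def by blast
  obtain \<beta> where \<beta>: "tvec \<beta>" "d1 \<beta> = interior3 (\<lambda>p. X p - a' *\<^sub>R dX p - b' *\<^sub>R dY p) (mu theta0)"
    using assms(2) unfolding exact_strict_contact_def exact2_def by blast
  have s: "smooth3 (\<lambda>q. \<alpha> q $ i)" "smooth3 (\<lambda>q. \<beta> q $ i)" for i
    using \<alpha>(1) \<beta>(1) by (auto simp: tvec_def tfun_def)
  have t: "tfun (\<lambda>q. \<alpha> q $ i - \<beta> q $ i)" for i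
    using \<alpha>(1) \<beta>(1) by (intro tfun_diff tvec_nth)
  have a: "pd 2 (\<lambda>q. \<alpha> q $ 3 - \<beta> q $ 3) p - pd 3 (\<lambda>q. \<alpha> q $ 2 - \<beta> q $ 2) p = (a - a') / 2" for p
  proof -
    have "d1 \<alpha> p $ 2 $ 3 - d1 \<beta> p $ 2 $ 3 = (a - a') / 2"
      unfolding \<alpha>(2) \<beta>(2) by (simp add: interior3_nth mu_theta0 dX_def dY_def axis_def algebra_simps)
    then show ?thesis using s by (simp add: d1_def pd_diff_fun)
  qed
  have b: "pd 1 (\<lambda>q. \<alpha> q $ 3 - \<beta> q $ 3) p - pd 3 (\<lambda>q. \<alpha> q $ 1 - \<beta> q $ 1) p = (b' - b) / 2" for p
  proof -
    have "d1 \<alpha> p $ 1 $ 3 - d1 \<beta> p $ 1 $ 3 = (b' - b) / 2"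
      unfolding \<alpha>(2) \<beta>(2) by (simp add: interior3_nth mu_theta0 dX_def dY_def axis_def algebra_simps)
    then show ?thesis using s by (simp add: d1_def pd_diff_fun)
  qed
  show ?thesis
    using periodic_pd_diff_constant_eq_0[OF t t _ a] periodic_pd_diff_constant_eq_0[OF t t _ b] by simp
qed

lemma ex1_sub_dX_dY_exact:
  assumes X: "X \<in> strict_contact theta0"
  shows "\<exists>!(a, b). (\<lambda>p. X p - a *\<^sub>R dX p - b *\<^sub>R dY p) \<in> exact_strict_contact theta0"
proof (rule ex1I[where a="(dX_coeff X, dY_coeff X)"])
  show "case (dX_coeff X, dY_coeff X) of
      (a, b) \<Rightarrow> (\<lambda>p. X p - a *\<^sub>R dX p - b *\<^sub>R dY p) \<in> exact_strict_contact theta0"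
    using sub_dX_dY_exact_strict_contact[OF X] by simp
next
  fix y assume "case y of (a, b) \<Rightarrow> (\<lambda>p. X p - a *\<^sub>R dX p - b *\<^sub>R dY p) \<in> exact_strict_contact theta0"
  then show "y = (dX_coeff X, dY_coeff X)"
    using sub_dX_dY_exact_unique sub_dX_dY_exact_strict_contact[OF X] by (cases y) auto
qed

lemma interior3_sub_dX_dY:
  "interior3 (\<lambda>p. X p - a *\<^sub>R dX p - b *\<^sub>R dY p) (mu theta0) =
    (\<lambda>p. interior3 X (mu theta0) p - (- a / 2) *\<^sub>R basic2 2 3 p - (b / 2) *\<^sub>R basic2 1 3 p)"
  by (rule ext)
    (simp add: vec_eq_iff forall_3 interior3_nth mu_theta0 basic2_def dX_def dY_def axis_def algebra_simps)

lemma flux_in_span: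
  assumes X: "X \<in> strict_contact theta0"
  shows "\<exists>a b. exact2 (\<lambda>p. interior3 X (mu theta0) p - a *\<^sub>R basic2 2 3 p - b *\<^sub>R basic2 1 3 p)"
proof -
  have "exact2 (\<lambda>p. interior3 X (mu theta0) p - (- dX_coeff X / 2) *\<^sub>R basic2 2 3 p
      - (dY_coeff X / 2) *\<^sub>R basic2 1 3 p)"
  proof -
    have "exact2 (interior3 (\<lambda>p. X p - dX_coeff X *\<^sub>R dX p - dY_coeff X *\<^sub>R dY p) (mu theta0))"
      using sub_dX_dY_exact_strict_contact[OF X] unfolding exact_strict_contact_def by blast
    then show ?thesis unfolding interior3_sub_dX_dY .
  qed
  then show ?thesis by (intro exI)
qed

lemma flux_surjective:
  "\<exists>X \<in> strict_contact theta0.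
     exact2 (\<lambda>p. interior3 X (mu theta0) p - a *\<^sub>R basic2 2 3 p - b *\<^sub>R basic2 1 3 p)"
proof -
  define v :: "real^3" where "v = vector [-2 * a, 2 * b, 0]"
  have "(\<lambda>p. v) \<in> strict_contact theta0"
    by (rule const_strict_contact_theta0) (simp add: v_def)
  moreover have "(\<lambda>p. interior3 (\<lambda>p. v) (mu theta0) p - a *\<^sub>R basic2 2 3 p - b *\<^sub>R basic2 1 3 p) =
      d1 (\<lambda>p. 0)"
    by (rule ext) (simp add: vec_eq_iff forall_3 interior3_nth mu_theta0 basic2_def v_def d1_def pd_const)
  then have "exact2 (\<lambda>p. interior3 (\<lambda>p. v) (mu theta0) p - a *\<^sub>R basic2 2 3 p - b *\<^sub>R basic2 1 3 p)"
    unfolding exact2_def using tvec_const by metis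
  ultimately show ?thesis by blast
qed

section \<open>Brackets\<close>

definition divergence :: "(real^3 \<Rightarrow> real^3) \<Rightarrow> real^3 \<Rightarrow> real" where
  "divergence X q = pd 1 (\<lambda>q. X q $ 1) q + pd 2 (\<lambda>q. X q $ 2) q + pd 3 (\<lambda>q. X q $ 3) q"

lemma divergence_strict_contact_theta0:
  assumes X: "X \<in> strict_contact theta0"
  shows "divergence X p = 0"
proof -
  let ?f = "contact_ham X"
  have sf: "smooth3 ?f" "smooth3 (pd i ?f)" "smooth3 (pd i (pd j ?f))" for i j
    using smooth3_contact_ham[OF X] by (auto intro: smooth3_pd)
  have X_ham: "(\<lambda>q. X q $ 1) = (\<lambda>q. cos (q $ 3) * ?f q - sin (q $ 3) * pd 3 ?f q)"
    "(\<lambda>q. X q $ 2) = (\<lambda>q. sin (q $ 3) * ?f q + cos (q $ 3) * pd 3 ?f q)"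
    "(\<lambda>q. X q $ 3) = (\<lambda>q. sin (q $ 3) * pd 1 ?f q - cos (q $ 3) * pd 2 ?f q)"
    using strict_contact_theta0_by_ham[OF X] by auto
  have "pd 1 (pd 3 ?f) = pd 3 (pd 1 ?f)" "pd 2 (pd 3 ?f) = pd 3 (pd 2 ?f)"
    using pd_commute[OF sf(1)] by auto
  then have "divergence X p = 2 * (cos (p $ 3) * pd 1 ?f p + sin (p $ 3) * pd 2 ?f p)"
    unfolding divergence_def X_ham
    by (simp add: sf smooth3_intros pd_fun_simps algebra_simps)
  then show ?thesis
    using strict_contact_theta0_by_ham(4)[OF X] by simp
qed

lemma lie_bracket_nth_fun: "(\<lambda>q. lie_bracket X Y q $ i) = (\<lambda>q.
    (X q $ 1 * pd 1 (\<lambda>q. Y q $ i) q - Y q $ 1 * pd 1 (\<lambda>q. X q $ i) q) +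
    (X q $ 2 * pd 2 (\<lambda>q. Y q $ i) q - Y q $ 2 * pd 2 (\<lambda>q. X q $ i) q) +
    (X q $ 3 * pd 3 (\<lambda>q. Y q $ i) q - Y q $ 3 * pd 3 (\<lambda>q. X q $ i) q))"
  by (simp add: lie_bracket_def sum_3)

lemma tvec_lie_bracket: "tvec X \<Longrightarrow> tvec Y \<Longrightarrow> tvec (lie_bracket X Y)"
  unfolding tvec_def lie_bracket_nth_fun
  by (intro allI tfun_add tfun_diff tfun_mult tfun_pd) auto

lemma tvec_cross3: "tvec X \<Longrightarrow> tvec Y \<Longrightarrow> tvec (\<lambda>q. c *\<^sub>R cross3 (Y q) (X q))"
  unfolding tvec_def forall_3 by (simp add: cross_components tfun_cmult tfun_diff tfun_mult)

text \<open>For divergence free X and Y, i_[X,Y] (c vol) = d (i_Y i_X (c vol)), and i_Y i_X (c vol)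
  is the 1-form c (Y \<times> X).\<close>

lemma d1_cross3:
  assumes X: "tvec X" and Y: "tvec Y"
    and div_X: "\<And>p. divergence X p = 0" and div_Y: "\<And>p. divergence Y p = 0"
  shows "d1 (\<lambda>q. c *\<^sub>R cross3 (Y q) (X q)) = interior3 (lie_bracket X Y) (\<lambda>q. c)"
proof (rule ext, rule antisym_mat3_eqI[OF d1_antisym interior3_antisym])
  fix p
  have s: "smooth3 (\<lambda>q. X q $ i)" "smooth3 (\<lambda>q. Y q $ i)" for i
    using X Y by (auto simp: tvec_def tfun_def)
  have dx: "pd 1 (\<lambda>q. X q $ 1) p = - pd 2 (\<lambda>q. X q $ 2) p - pd 3 (\<lambda>q. X q $ 3) p"
    using div_X[of p] by (simp add: divergence_def algebra_simps)
  have dy: "pd 1 (\<lambda>q. Y q $ 1) p = - pd 2 (\<lambda>q. Y q $ 2) p - pd 3 (\<lambda>q. Y q $ 3) p"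
    using div_Y[of p] by (simp add: divergence_def algebra_simps)
  show "d1 (\<lambda>q. c *\<^sub>R cross3 (Y q) (X q)) p $ 1 $ 2 = interior3 (lie_bracket X Y) (\<lambda>q. c) p $ 1 $ 2"
    "d1 (\<lambda>q. c *\<^sub>R cross3 (Y q) (X q)) p $ 1 $ 3 = interior3 (lie_bracket X Y) (\<lambda>q. c) p $ 1 $ 3"
    "d1 (\<lambda>q. c *\<^sub>R cross3 (Y q) (X q)) p $ 2 $ 3 = interior3 (lie_bracket X Y) (\<lambda>q. c) p $ 2 $ 3"
    unfolding d1_def interior3_nth
    by (simp_all add: cross_components s smooth3_intros pd_fun_simps,
        simp_all add: lie_bracket_def sum_3 dx dy algebra_simps)
qed

lemma lie1_lie_bracket_theta0:
  assumes X: "tvec X" and Y: "tvec Y"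
  shows "lie1 (lie_bracket X Y) theta0 p $ j =
    (\<Sum>k\<in>UNIV. X p $ k * pd k (\<lambda>q. lie1 Y theta0 q $ j) p - Y p $ k * pd k (\<lambda>q. lie1 X theta0 q $ j) p)
    + (\<Sum>i\<in>UNIV. lie1 Y theta0 p $ i * pd j (\<lambda>q. X q $ i) p - lie1 X theta0 p $ i * pd j (\<lambda>q. Y q $ i) p)"
proof -
  have s: "smooth3 (\<lambda>q. X q $ i)" "smooth3 (\<lambda>q. Y q $ i)" for i
    using X Y by (auto simp: tvec_def tfun_def)
  have s2: "smooth3 (pd k (\<lambda>q. X q $ i))" "smooth3 (pd k (\<lambda>q. Y q $ i))"
     "smooth3 (pd l (pd k (\<lambda>q. X q $ i)))" "smooth3 (pd l (pd k (\<lambda>q. Y q $ i)))" for i k l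
    using s by (auto intro: smooth3_pd)
  have cl: "pd 2 (pd 1 (\<lambda>q. X q $ i)) = pd 1 (pd 2 (\<lambda>q. X q $ i))"
    "pd 3 (pd 1 (\<lambda>q. X q $ i)) = pd 1 (pd 3 (\<lambda>q. X q $ i))"
    "pd 3 (pd 2 (\<lambda>q. X q $ i)) = pd 2 (pd 3 (\<lambda>q. X q $ i))"
    "pd 2 (pd 1 (\<lambda>q. Y q $ i)) = pd 1 (pd 2 (\<lambda>q. Y q $ i))"
    "pd 3 (pd 1 (\<lambda>q. Y q $ i)) = pd 1 (pd 3 (\<lambda>q. Y q $ i))"
    "pd 3 (pd 2 (\<lambda>q. Y q $ i)) = pd 2 (pd 3 (\<lambda>q. Y q $ i))" for i
    using pd_commute s by metis+
  show ?thesis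
    unfolding lie1_def lie_bracket_nth_fun
    by (cases j rule: cases_3;
        simp add: sum_3 s s2 smooth3_intros pd_fun_simps pd_cos_z pd_sin_z pd_const cl;
        simp add: lie_bracket_def sum_3 algebra_simps)
qed

lemma lie_bracket_exact_strict_contact:
  assumes X: "X \<in> strict_contact theta0" and Y: "Y \<in> exact_strict_contact theta0"
  shows "lie_bracket X Y \<in> exact_strict_contact theta0"
proof -
  have Y': "Y \<in> strict_contact theta0"
    using Y exact_strict_contact_def by blast
  have tX: "tvec X" and tY: "tvec Y" and "lie1 X theta0 = (\<lambda>p. 0)" "lie1 Y theta0 = (\<lambda>p. 0)"
    using X Y' strict_contact_def by auto
  then have "lie1 (lie_bracket X Y) theta0 p $ j = 0" for p j
    unfolding lie1_lie_bracket_theta0[OF tX tY] by (simp add: pd_const)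
  then have "lie_bracket X Y \<in> strict_contact theta0"
    unfolding strict_contact_def using tvec_lie_bracket[OF tX tY] by (auto simp: vec_eq_iff)
  moreover have "interior3 (lie_bracket X Y) (mu theta0) = d1 (\<lambda>q. (-1/2) *\<^sub>R cross3 (Y q) (X q))"
    unfolding mu_theta0_fun
    by (rule d1_cross3[OF tX tY divergence_strict_contact_theta0[OF X]
          divergence_strict_contact_theta0[OF Y'], symmetric])
  then have "exact2 (interior3 (lie_bracket X Y) (mu theta0))"
    unfolding exact2_def using tvec_cross3[OF tX tY, of "-1/2"] by metis
  ultimately show ?thesis
    unfolding exact_strict_contact_def by blast
qed

theorem mainTheorem4:
  shows "contact_form theta0 \<and> \<not> regular theta0
    \<and> dX \<in> strict_contact theta0 \<and> dY \<in> strict_contact theta0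
    \<and> (\<forall>X \<in> strict_contact theta0. \<exists>!(a, b). (\<lambda>p. X p - a *\<^sub>R dX p - b *\<^sub>R dY p) \<in> exact_strict_contact theta0)
    \<and> (\<forall>X \<in> strict_contact theta0. \<forall>Y \<in> exact_strict_contact theta0. lie_bracket X Y \<in> exact_strict_contact theta0)
    \<and> (\<forall>X \<in> strict_contact theta0. \<exists>a b. exact2 (\<lambda>p. interior3 X (mu theta0) p - a *\<^sub>R basic2 2 3 p - b *\<^sub>R basic2 1 3 p))
    \<and> (\<forall>a b. \<exists>X \<in> strict_contact theta0. exact2 (\<lambda>p. interior3 X (mu theta0) p - a *\<^sub>R basic2 2 3 p - b *\<^sub>R basic2 1 3 p))
    \<and> (\<forall>a b. exact2 (\<lambda>p. a *\<^sub>R basic2 2 3 p + b *\<^sub>R basic2 1 3 p) \<longrightarrow> a = 0 \<and> b = 0)"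
  using contact_form_theta0 not_regular_theta0 dX_strict_contact dY_strict_contact
    ex1_sub_dX_dY_exact lie_bracket_exact_strict_contact flux_in_span flux_surjective
    exact_const_2form_eq_0
  by blast

end
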